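(* Let $\mathcal I$ be an inference family on a finite hypergraph $H=(V,F)$ and $\Psi=\{\Psi_\alpha\}$ a graphical model with $\Psi_\alpha=\exp\langle\bar\theta_\alpha,\phi_\alpha\rangle$, $\bar\theta_\alpha=(\bar\theta'_\alpha,(\bar\theta^\alpha_i)_{i\in\alpha})$. Let $T$ be the LBP update map on message parameters $\boldsymbol\mu=\{\mu_{\alpha\to i}\}$, $$T(\boldsymbol\mu)_{\alpha\to i}=\Lambda_i^{-1}\Big(\Lambda_\alpha\big(\bar\theta'_\alpha,\ (\bar\theta^\alpha_j+\textstyle\sum_{\beta\in N_j\setminus\alpha}\mu_{\beta\to j})_{j\in\alpha}\big)_i\Big)-\sum_{\gamma\in N_i\setminus\alpha}\mu_{\gamma\to i}.$$ At an LBP fixed point $\boldsymbol\mu^*$ with beliefs $b_i,b_\alpha$, $$\frac{\partial T(\boldsymbol\mu)_{\alpha\to i}}{\partial\mu_{\beta\to j}}=\begin{cases}\mathrm{Var}_{b_i}(\phi_i)^{-1}\mathrm{Cov}_{b_\alpha}(\phi_i,\phi_j)&\text{if }j\in\alpha\setminus\{i\}\text{ and }\beta\in N_j\setminus\{\alpha\},\\0&\text{otherwise.}\end{cases}$$ Equivalently, $T'(\boldsymbol\mu^* )=\mathcal M(\boldsymbol u)$ with $u^\alpha_{i\to j}=\mathrm{Var}_{b_j}(\phi_j)^{-1}\mathrm{Cov}_{b_\alpha}(\phi_j,\phi_i)$.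
   Context: Inference family: for $i\in V$ an exponential family $\mathcal E_i$ on $(\mathcal X_i,\nu_i)$ with statistic $\phi_i\in\mathbb{R}^{r_i}$ and bijective expectation map $\Lambda_i(\theta_i)=\mathbb E_{\theta_i}\phi_i$; for $\alpha\in F$ an exponential family $\mathcal E_\alpha$ on $\prod_{i\in\alpha}\mathcal X_i$ with statistic $\phi_\alpha=(\bar\phi_\alpha,(\phi_i)_{i\in\alpha})$ and expectation map $\Lambda_\alpha$; $\Lambda_\alpha(\cdot)_i$ denotes the $\mathbb E\phi_i$-component. Covariances are invertible and marginals of $\mathcal E_\alpha$ onto $x_i$ lie in $\mathcal E_i$. $N_i=\{\alpha\in F:i\in\alpha\}$. Messages $m_{\alpha\to i}(x_i)=\exp\langle\mu_{\alpha\to i},\phi_i(x_i)\rangle$; $T$ is the parametric form of the parallel LBP update $m_{\alpha\to i}\propto\int\Psi_\alpha\prod_{j\in\alpha\setminus i}\prod_{\beta\ni j,\beta\ne\alpha}m_{\beta\to j}\,d\nu_{\alpha\setminus i}$. A fixed point satisfies $T(\boldsymbol\mu^* )=\boldsymbol\mu^*$; beliefs are $b_i\propto\prod_{\alpha\ni i}m_{\alpha\to i}$, $b_\alpha\propto\Psi_\alpha\prod_{j\in\alpha}\prod_{\beta\ni j,\beta\ne\alpha}m_{\beta\to j}$. Directed edges $\vec E=\{(\alpha\to i)\}$, $s(\alpha\to i)=\alpha$, $t(\alpha\to i)=i$; $e'\rightharpoonup e$ means $t(e')\in s(e)$, $t(e')\ne t(e)$, $s(e')\ne s(e)$; $(\mathcal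 M(\boldsymbol u)f)(e)=\sum_{e':e'\rightharpoonup e}u^{s(e)}_{t(e')\to t(e)}f(e')$. *)

theory Defs
  imports "HOL-Analysis.Analysis"
begin

text \<open>A vector of dimension d is a function nat => real vanishing from index d on;
  a d x d matrix is a function nat => nat => real, only entries below d matter.\<close>

definition vecs :: "nat \<Rightarrow> (nat \<Rightarrow> real) set" where
  "vecs d = {v. \<forall>k\<ge>d. v k = 0}"

definition ip :: "nat \<Rightarrow> (nat \<Rightarrow> real) \<Rightarrow> (nat \<Rightarrow> real) \<Rightarrow> real" where
  "ip d a b = (\<Sum>k<d. a k * b k)"

definition cat2 :: "nat \<Rightarrow> (nat \<Rightarrow> real) \<Rightarrow> (nat \<Rightarrow> real) \<Rightarrow> (nat \<Rightarrow> real)" where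
  "cat2 d u w = (\<lambda>k. if k < d then u k else w (k - d))"

fun catl :: "(nat \<times> (nat \<Rightarrow> real)) list \<Rightarrow> (nat \<Rightarrow> real)" where
  "catl [] = (\<lambda>_. 0)"
| "catl ((d, u) # xs) = cat2 d u (catl xs)"

definition mat_mult :: "nat \<Rightarrow> (nat \<Rightarrow> nat \<Rightarrow> real) \<Rightarrow> (nat \<Rightarrow> nat \<Rightarrow> real) \<Rightarrow> (nat \<Rightarrow> nat \<Rightarrow> real)" where
  "mat_mult n A B = (\<lambda>k l. \<Sum>m<n. A k m * B m l)"

definition mat_is_inv :: "nat \<Rightarrow> (nat \<Rightarrow> nat \<Rightarrow> real) \<Rightarrow> (nat \<Rightarrow> nat \<Rightarrow> real) \<Rightarrow> bool" where
  "mat_is_inv n A B \<longleftrightarrow> (\<forall>k<n. \<forall>l<n.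
      mat_mult n A B k l = (if k = l then 1 else 0) \<and> mat_mult n B A k l = (if k = l then 1 else 0))"

definition invertible_n :: "nat \<Rightarrow> (nat \<Rightarrow> nat \<Rightarrow> real) \<Rightarrow> bool" where
  "invertible_n n A \<longleftrightarrow> (\<exists>B. mat_is_inv n A B)"

definition mat_inv :: "nat \<Rightarrow> (nat \<Rightarrow> nat \<Rightarrow> real) \<Rightarrow> (nat \<Rightarrow> nat \<Rightarrow> real)" where
  "mat_inv n A = (THE B. mat_is_inv n A B \<and> (\<forall>k l. n \<le> k \<or> n \<le> l \<longrightarrow> B k l = 0))"

definition ef_Z :: "'a measure \<Rightarrow> nat \<Rightarrow> ('a \<Rightarrow> nat \<Rightarrow> real) \<Rightarrow> (nat \<Rightarrow> real) \<Rightarrow> ennreal" where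
  "ef_Z M d s \<theta> = (\<integral>\<^sup>+ x. ennreal (exp (ip d \<theta> (s x))) \<partial>M)"

definition ef_Theta :: "'a measure \<Rightarrow> nat \<Rightarrow> ('a \<Rightarrow> nat \<Rightarrow> real) \<Rightarrow> (nat \<Rightarrow> real) set" where
  "ef_Theta M d s = {\<theta> \<in> vecs d. ef_Z M d s \<theta> < \<infinity>}"

definition ef_dens :: "'a measure \<Rightarrow> nat \<Rightarrow> ('a \<Rightarrow> nat \<Rightarrow> real) \<Rightarrow> (nat \<Rightarrow> real) \<Rightarrow> 'a \<Rightarrow> real" where
  "ef_dens M d s \<theta> x = exp (ip d \<theta> (s x)) / (\<integral> y. exp (ip d \<theta> (s y)) \<partial>M)"

definition ef_distr :: "'a measure \<Rightarrow> nat \<Rightarrow> ('a \<Rightarrow> nat \<Rightarrow> real) \<Rightarrow> (nat \<Rightarrow> real) \<Rightarrow> 'a measure" where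
  "ef_distr M d s \<theta> = density M (\<lambda>x. ennreal (ef_dens M d s \<theta> x))"

definition ef_E :: "'a measure \<Rightarrow> nat \<Rightarrow> ('a \<Rightarrow> nat \<Rightarrow> real) \<Rightarrow> (nat \<Rightarrow> real) \<Rightarrow> ('a \<Rightarrow> real) \<Rightarrow> real" where
  "ef_E M d s \<theta> g = (\<integral> x. g x * ef_dens M d s \<theta> x \<partial>M)"

definition ef_mean :: "'a measure \<Rightarrow> nat \<Rightarrow> ('a \<Rightarrow> nat \<Rightarrow> real) \<Rightarrow> (nat \<Rightarrow> real) \<Rightarrow> (nat \<Rightarrow> real)" where
  "ef_mean M d s \<theta> = (\<lambda>k. if k < d then ef_E M d s \<theta> (\<lambda>x. s x k) else 0)"

definition ef_cov :: "'a measure \<Rightarrow> nat \<Rightarrow> ('a \<Rightarrow> nat \<Rightarrow> real) \<Rightarrow> (nat \<Rightarrow> real)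
     \<Rightarrow> ('a \<Rightarrow> nat \<Rightarrow> real) \<Rightarrow> ('a \<Rightarrow> nat \<Rightarrow> real) \<Rightarrow> (nat \<Rightarrow> nat \<Rightarrow> real)" where
  "ef_cov M d s \<theta> f g = (\<lambda>k l. ef_E M d s \<theta> (\<lambda>x. f x k * g x l)
                                 - ef_E M d s \<theta> (\<lambda>x. f x k) * ef_E M d s \<theta> (\<lambda>x. g x l))"

definition open_in_vecs :: "nat \<Rightarrow> (nat \<Rightarrow> real) set \<Rightarrow> bool" where
  "open_in_vecs d S \<longleftrightarrow> S \<subseteq> vecs d \<and>
     (\<forall>\<theta>\<in>S. \<exists>e>0. \<forall>\<theta>'\<in>vecs d. (\<Sum>k<d. (\<theta>' k - \<theta> k)\<^sup>2) < e \<longrightarrow> \<theta>' \<in> S)"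

definition exp_family :: "'a measure \<Rightarrow> nat \<Rightarrow> ('a \<Rightarrow> nat \<Rightarrow> real) \<Rightarrow> bool" where
  "exp_family M d s \<longleftrightarrow>
     (\<forall>k<d. (\<lambda>x. s x k) \<in> borel_measurable M) \<and>
     (\<forall>x\<in>space M. s x \<in> vecs d) \<and>
     open_in_vecs d (ef_Theta M d s) \<and>
     (\<forall>\<theta>\<in>ef_Theta M d s. invertible_n d (ef_cov M d s \<theta> s s))"

definition nbhd :: "'v set set \<Rightarrow> 'v \<Rightarrow> 'v set set" where
  "nbhd F i = {\<alpha> \<in> F. i \<in> \<alpha>}"

text \<open>Factor statistic \<phi>_\<alpha> = (\<phi>bar_\<alpha>, (\<phi>_i(x_i))_{i \<in> \<alpha>}), blocks in increasing order of i.\<close>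
definition fac_dim :: "('v::linorder \<Rightarrow> nat) \<Rightarrow> ('v set \<Rightarrow> nat) \<Rightarrow> 'v set \<Rightarrow> nat" where
  "fac_dim r rb \<alpha> = rb \<alpha> + (\<Sum>i\<in>\<alpha>. r i)"

definition fac_stat :: "('v::linorder \<Rightarrow> nat) \<Rightarrow> ('v \<Rightarrow> 'x \<Rightarrow> nat \<Rightarrow> real)
    \<Rightarrow> ('v set \<Rightarrow> nat) \<Rightarrow> ('v set \<Rightarrow> ('v \<Rightarrow> 'x) \<Rightarrow> nat \<Rightarrow> real) \<Rightarrow> 'v set \<Rightarrow> ('v \<Rightarrow> 'x) \<Rightarrow> nat \<Rightarrow> real" where
  "fac_stat r \<phi> rb \<phi>b \<alpha> x =
     catl ((rb \<alpha>, \<phi>b \<alpha> x) # map (\<lambda>i. (r i, \<phi> i (x i))) (sorted_list_of_set \<alpha>))"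

definition fac_meas :: "('v \<Rightarrow> 'x measure) \<Rightarrow> 'v set \<Rightarrow> ('v \<Rightarrow> 'x) measure" where
  "fac_meas \<nu> \<alpha> = PiM \<alpha> \<nu>"

definition inference_family ::
  "'v::linorder set \<Rightarrow> 'v set set \<Rightarrow> ('v \<Rightarrow> 'x measure) \<Rightarrow> ('v \<Rightarrow> nat) \<Rightarrow> ('v \<Rightarrow> 'x \<Rightarrow> nat \<Rightarrow> real)
     \<Rightarrow> ('v set \<Rightarrow> nat) \<Rightarrow> ('v set \<Rightarrow> ('v \<Rightarrow> 'x) \<Rightarrow> nat \<Rightarrow> real) \<Rightarrow> bool" where
  "inference_family V F \<nu> r \<phi> rb \<phi>b \<longleftrightarrow>
     finite V \<and> finite F \<and> (\<forall>\<alpha>\<in>F. \<alpha> \<subseteq> V) \<and>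
     (\<forall>i\<in>V. sigma_finite_measure (\<nu> i) \<and> exp_family (\<nu> i) (r i) (\<phi> i) \<and>
            inj_on (ef_mean (\<nu> i) (r i) (\<phi> i)) (ef_Theta (\<nu> i) (r i) (\<phi> i))) \<and>
     (\<forall>\<alpha>\<in>F. exp_family (fac_meas \<nu> \<alpha>) (fac_dim r rb \<alpha>) (fac_stat r \<phi> rb \<phi>b \<alpha>) \<and>
        (\<forall>\<theta>\<in>ef_Theta (fac_meas \<nu> \<alpha>) (fac_dim r rb \<alpha>) (fac_stat r \<phi> rb \<phi>b \<alpha>). \<forall>i\<in>\<alpha>.
           \<exists>\<theta>i\<in>ef_Theta (\<nu> i) (r i) (\<phi> i).
             distr (ef_distr (fac_meas \<nu> \<alpha>) (fac_dim r rb \<alpha>) (fac_stat r \<phi> rb \<phi>b \<alpha>) \<theta>) (\<nu> i) (\<lambda>x. x i)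
             = ef_distr (\<nu> i) (r i) (\<phi> i) \<theta>i))"

text \<open>Natural parameter of the factor belief:
  (\<theta>bar'_\<alpha>, (\<theta>bar^\<alpha>_j + \<Sum>_{\<beta> \<in> N_j \ \<alpha>} \<mu>_{\<beta>\<rightarrow>j})_{j\<in>\<alpha>}).\<close>
definition fac_param :: "'v::linorder set set \<Rightarrow> ('v \<Rightarrow> nat) \<Rightarrow> ('v set \<Rightarrow> nat)
    \<Rightarrow> ('v set \<Rightarrow> nat \<Rightarrow> real) \<Rightarrow> ('v set \<Rightarrow> 'v \<Rightarrow> nat \<Rightarrow> real)
    \<Rightarrow> ('v set \<Rightarrow> 'v \<Rightarrow> nat \<Rightarrow> real) \<Rightarrow> 'v set \<Rightarrow> nat \<Rightarrow> real" where
  "fac_param F r rb thb' thb \<mu> \<alpha> =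
     catl ((rb \<alpha>, thb' \<alpha>) # map (\<lambda>j. (r j, \<lambda>k. thb \<alpha> j k + (\<Sum>\<beta>\<in>nbhd F j - {\<alpha>}. \<mu> \<beta> j k)))
                                 (sorted_list_of_set \<alpha>))"

definition lbp_T ::
  "'v::linorder set set \<Rightarrow> ('v \<Rightarrow> 'x measure) \<Rightarrow> ('v \<Rightarrow> nat) \<Rightarrow> ('v \<Rightarrow> 'x \<Rightarrow> nat \<Rightarrow> real)
     \<Rightarrow> ('v set \<Rightarrow> nat) \<Rightarrow> ('v set \<Rightarrow> ('v \<Rightarrow> 'x) \<Rightarrow> nat \<Rightarrow> real)
     \<Rightarrow> ('v set \<Rightarrow> nat \<Rightarrow> real) \<Rightarrow> ('v set \<Rightarrow> 'v \<Rightarrow> nat \<Rightarrow> real)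
     \<Rightarrow> ('v set \<Rightarrow> 'v \<Rightarrow> nat \<Rightarrow> real) \<Rightarrow> 'v set \<Rightarrow> 'v \<Rightarrow> nat \<Rightarrow> real" where
  "lbp_T F \<nu> r \<phi> rb \<phi>b thb' thb \<mu> \<alpha> i =
     (let \<theta>\<alpha> = fac_param F r rb thb' thb \<mu> \<alpha>;
          m = (\<lambda>k. if k < r i then
                      ef_E (fac_meas \<nu> \<alpha>) (fac_dim r rb \<alpha>) (fac_stat r \<phi> rb \<phi>b \<alpha>) \<theta>\<alpha> (\<lambda>x. \<phi> i (x i) k)
                    else 0);
          \<theta>i = the_inv_into (ef_Theta (\<nu> i) (r i) (\<phi> i)) (ef_mean (\<nu> i) (r i) (\<phi> i)) m
      in (\<lambda>k. \<theta>i k - (\<Sum>\<gamma>\<in>nbhd F i - {\<alpha>}. \<mu> \<gamma> i k)))"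

definition perturb :: "('v set \<Rightarrow> 'v \<Rightarrow> nat \<Rightarrow> real) \<Rightarrow> 'v set \<Rightarrow> 'v \<Rightarrow> nat \<Rightarrow> real
    \<Rightarrow> ('v set \<Rightarrow> 'v \<Rightarrow> nat \<Rightarrow> real)" where
  "perturb \<mu> \<beta> j l t = \<mu>(\<beta> := (\<mu> \<beta>)(j := (\<lambda>k. \<mu> \<beta> j k + (if k = l then t else 0))))"

end

(*
  Differentiating T reduces, by the chain rule, to differentiating the mean map \<Lambda>_\<alpha> of the
  factor family and the inverse of the mean map \<Lambda>_i of the vertex family.  The mean map of a
  regular exponential family has derivative Cov(\<phi>, \<phi>): the second-order Taylor expansion of
  exp under the integral is dominated by an exponential moment of |\<phi>|, which exists because the
  natural parameter space is open.  \<Lambda>_i is continuous and injective on an open set, so by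
  invariance of domain its inverse is continuous; absorbing the quadratic Taylor error then shows
  that \<Lambda>_i^-1 is differentiable with derivative Var(\<phi>_i)^-1.

  Perturbing \<mu>_{\<beta>\<rightarrow>j} with j \<in> \<alpha>, \<beta> \<noteq> \<alpha> moves one coordinate of the parameter of b_\<alpha>, which
  yields Var(\<phi>_i)^-1 Cov_{b_\<alpha>}(\<phi>_i, \<phi>_j); for j = i this is the identity and cancels the
  subtracted message.  At a fixed point the parameter of the x_i-marginal of b_\<alpha> is
  \<Sum>_{\<gamma> \<ni> i} \<mu>_{\<gamma>\<rightarrow>i}, the parameter of b_i, so the variance is taken under b_i.
*)

theory Submission
  imports Defs "HOL-Homology.Invariance_of_Domain" "HOL-Library.Function_Algebras"
begin

section \<open>Elementary real estimates\<close>

lemma abs_exp_minus_one_minus_le: "\<bar>exp (u::real) - 1 - u\<bar> \<le> u\<^sup>2 * exp \<bar>u\<bar>"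
proof -
  obtain t where t: "\<bar>t\<bar> \<le> \<bar>u\<bar>" "exp u = (\<Sum>m<2. u ^ m / fact m) + exp t / fact 2 * u ^ 2"
    using Maclaurin_exp_le[of u 2] by blast
  have eq: "exp u - 1 - u = exp t / 2 * u\<^sup>2" using t(2) by (simp add: numeral_2_eq_2)
  have "\<bar>exp u - 1 - u\<bar> = exp t / 2 * u\<^sup>2" by (subst eq) (rule abs_of_nonneg, simp)
  also have "\<dots> \<le> exp \<bar>u\<bar> * u\<^sup>2"
  proof (rule mult_right_mono)
    have "exp t \<le> exp \<bar>u\<bar>" using t(1) by simp
    then show "exp t / 2 \<le> exp \<bar>u\<bar>" using exp_gt_zero[of "\<bar>u\<bar>"] by linarith
  qed simp
  finally show ?thesis by (simp add: mult.commute)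
qed

lemma one_plus_cube_le_exp:
  fixes y \<delta> :: real
  assumes "y \<ge> 0" "\<delta> > 0"
  shows "(1 + y)^3 \<le> (6/\<delta>)^3 * exp (\<delta>/2) * exp (\<delta>*y/2)"
proof -
  have "(1+y)*\<delta>/6 \<le> exp ((1+y)*\<delta>/6)" using exp_ge_add_one_self[of "(1+y)*\<delta>/6"] by linarith
  then have "((1+y)*\<delta>/6)^3 \<le> (exp ((1+y)*\<delta>/6))^3"
    by (intro power_mono) (use assms in auto)
  also have "(exp ((1+y)*\<delta>/6))^3 = exp (\<delta>/2) * exp (\<delta>*y/2)"
    by (simp add: exp_of_nat_mult[symmetric] exp_add[symmetric] algebra_simps)
  finally have *: "(1+y)^3 * (\<delta>/6)^3 \<le> exp (\<delta>/2) * exp (\<delta>*y/2)"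
    by (simp add: power_mult_distrib[symmetric] algebra_simps)
  have "(1+y)^3 = (6/\<delta>)^3 * ((1+y)^3 * (\<delta>/6)^3)" using assms by (simp add: field_simps)
  also have "\<dots> \<le> (6/\<delta>)^3 * (exp (\<delta>/2) * exp (\<delta>*y/2))"
    by (rule mult_left_mono[OF *]) (use assms in simp)
  finally show ?thesis by simp
qed

lemma quotient_linearization_error:
  fixes a0 b0 A1 B1 Ra Rb n L K :: real
  assumes b0: "b0 > 0" and hA: "\<bar>A1\<bar> \<le> L*n" and hB: "\<bar>B1\<bar> \<le> L*n"
    and hRa: "\<bar>Ra\<bar> \<le> K*n\<^sup>2" and hRb: "\<bar>Rb\<bar> \<le> K*n\<^sup>2"
    and n: "0 \<le> n" "n \<le> 1" and small: "L*n + K*n\<^sup>2 \<le> b0/2" and L: "L \<ge> 0" and K: "K \<ge> 0"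
  shows "\<bar>(a0+A1+Ra)/(b0+B1+Rb) - a0/b0 - (A1*b0 - a0*B1)/b0\<^sup>2\<bar>
     \<le> (2*(b0+\<bar>a0\<bar>)*L*(L+K)/b0^3 + 2*(b0+\<bar>a0\<bar>)*K/b0\<^sup>2) * n\<^sup>2"
proof -
  define b where "b = b0+B1+Rb"
  have bb: "\<bar>b - b0\<bar> \<le> L*n + K*n\<^sup>2" unfolding b_def using hB hRb by linarith
  then have bpos: "b \<ge> b0/2" using small by linarith
  then have bpos': "b > 0" using b0 by linarith
  have "K*n\<^sup>2 \<le> K*n"
    using n K by (intro mult_left_mono) (auto simp: power2_eq_square intro: mult_left_le_one_le)
  then have bb2: "\<bar>b - b0\<bar> \<le> (L+K)*n" using bb by (simp add: algebra_simps)
  have id: "(a0+A1+Ra)/b - a0/b0 - (A1*b0 - a0*B1)/b0\<^sup>2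
      = (b0*A1 - a0*B1)*(b0 - b)/(b*b0\<^sup>2) + (b0*Ra - a0*Rb)/(b*b0)"
  proof -
    have B1: "B1 = b - b0 - Rb" unfolding b_def by simp
    show ?thesis using b0 bpos' unfolding B1 by (simp add: field_simps power2_eq_square) algebra
  qed
  have t1: "\<bar>b0*A1 - a0*B1\<bar> \<le> (b0+\<bar>a0\<bar>)*(L*n)"
  proof -
    have "\<bar>b0*A1 - a0*B1\<bar> \<le> b0*\<bar>A1\<bar> + \<bar>a0\<bar>*\<bar>B1\<bar>"
      using b0 by (simp add: abs_mult abs_triangle_ineq4[THEN order.trans])
    also have "\<dots> \<le> b0*(L*n) + \<bar>a0\<bar>*(L*n)" using hA hB b0 by (intro add_mono mult_left_mono) auto
    finally show ?thesis by (simp add: algebra_simps)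
  qed
  have t2: "\<bar>b0*Ra - a0*Rb\<bar> \<le> (b0+\<bar>a0\<bar>)*(K*n\<^sup>2)"
  proof -
    have "\<bar>b0*Ra - a0*Rb\<bar> \<le> b0*\<bar>Ra\<bar> + \<bar>a0\<bar>*\<bar>Rb\<bar>"
      using b0 by (simp add: abs_mult abs_triangle_ineq4[THEN order.trans])
    also have "\<dots> \<le> b0*(K*n\<^sup>2) + \<bar>a0\<bar>*(K*n\<^sup>2)" using hRa hRb b0 by (intro add_mono mult_left_mono) auto
    finally show ?thesis by (simp add: algebra_simps)
  qed
  have e1: "\<bar>(b0*A1 - a0*B1)*(b0 - b)/(b*b0\<^sup>2)\<bar> \<le> 2*(b0+\<bar>a0\<bar>)*L*(L+K)/b0^3 * n\<^sup>2"
  proof -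
    have "\<bar>(b0*A1 - a0*B1)*(b0 - b)\<bar> \<le> ((b0+\<bar>a0\<bar>)*(L*n)) * ((L+K)*n)"
      unfolding abs_mult using t1 bb2 by (intro mult_mono) (auto simp: abs_minus_commute)
    moreover have "b*b0\<^sup>2 \<ge> b0^3/2" using bpos b0 by (simp add: power2_eq_square power3_eq_cube)
    ultimately have "\<bar>(b0*A1 - a0*B1)*(b0 - b)\<bar>/(b*b0\<^sup>2) \<le> ((b0+\<bar>a0\<bar>)*(L*n)) * ((L+K)*n) / (b0^3/2)"
      using b0 bpos' by (intro frac_le) (auto intro: mult_nonneg_nonneg)
    then show ?thesis using bpos' b0 by (simp add: abs_divide abs_mult power2_eq_square field_simps)
  qed
  have e2: "\<bar>(b0*Ra - a0*Rb)/(b*b0)\<bar> \<le> 2*(b0+\<bar>a0\<bar>)*K/b0\<^sup>2 * n\<^sup>2"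
  proof -
    have "b*b0 \<ge> b0\<^sup>2/2" using bpos b0 by (simp add: power2_eq_square)
    then have "\<bar>b0*Ra - a0*Rb\<bar>/(b*b0) \<le> (b0+\<bar>a0\<bar>)*(K*n\<^sup>2) / (b0\<^sup>2/2)"
      using b0 bpos' t2 by (intro frac_le) (auto intro: mult_nonneg_nonneg)
    then show ?thesis using bpos' b0 by (simp add: abs_divide abs_mult field_simps)
  qed
  show ?thesis
    unfolding b_def[symmetric] id
    using e1 e2 abs_triangle_ineq[of "(b0*A1 - a0*B1)*(b0 - b)/(b*b0\<^sup>2)" "(b0*Ra - a0*Rb)/(b*b0)"]
    by (simp add: algebra_simps)
qed

lemma le_linear_of_le_quadratic:
  fixes n t B a b :: real
  assumes n: "n \<le> \<bar>t\<bar> * B + a * n\<^sup>2 + b * t\<^sup>2" "0 \<le> n" and a: "a * n \<le> 1/2"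
    and t: "\<bar>t\<bar> \<le> 1" and b: "0 \<le> b"
  shows "n \<le> (2*B + 2*b) * \<bar>t\<bar>"
proof -
  have "a * n\<^sup>2 \<le> n / 2" using mult_right_mono[OF a n(2)] by (simp add: power2_eq_square mult_ac)
  moreover have "t\<^sup>2 \<le> \<bar>t\<bar>"
  proof -
    have "t\<^sup>2 = \<bar>t\<bar> * \<bar>t\<bar>" by (simp add: power2_eq_square)
    also have "\<dots> \<le> \<bar>t\<bar> * 1" using t by (intro mult_left_mono) auto
    finally show ?thesis by simp
  qed
  then have "b * t\<^sup>2 \<le> b * \<bar>t\<bar>" using b by (rule mult_left_mono)
  ultimately show ?thesis using n(1) by (simp add: algebra_simps)
qed

lemma has_real_derivative_of_quadratic_error:
  fixes f :: "real \<Rightarrow> real"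
  assumes "eventually (\<lambda>t. \<bar>f t - f 0 - t * D\<bar> \<le> K * t\<^sup>2) (at 0)"
  shows "(f has_real_derivative D) (at 0)"
proof -
  have "((\<lambda>t. (f t - f 0) / (t - 0) - D) \<longlongrightarrow> 0) (at 0)"
  proof (rule Lim_null_comparison)
    have nz: "eventually (\<lambda>t. t \<noteq> 0) (at (0::real))" by (simp add: eventually_at_filter)
    show "eventually (\<lambda>t. norm ((f t - f 0) / (t - 0) - D) \<le> \<bar>K\<bar> * \<bar>t\<bar>) (at 0)"
      using assms nz
    proof eventually_elim
      case (elim t)
      have "norm ((f t - f 0) / (t - 0) - D) = \<bar>f t - f 0 - t * D\<bar> / \<bar>t\<bar>"
        using elim(2) by (simp add: field_simps abs_divide)
      also have "\<dots> \<le> \<bar>K\<bar> * t\<^sup>2 / \<bar>t\<bar>"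
      proof (rule divide_right_mono)
        have "K * t\<^sup>2 \<le> \<bar>K\<bar> * t\<^sup>2" by (intro mult_right_mono) auto
        then show "\<bar>f t - f 0 - t * D\<bar> \<le> \<bar>K\<bar> * t\<^sup>2" using elim(1) by linarith
      qed simp
      also have "\<dots> = \<bar>K\<bar> * \<bar>t\<bar> * (\<bar>t\<bar> / \<bar>t\<bar>)"
      proof -
        have "t\<^sup>2 = \<bar>t\<bar> * \<bar>t\<bar>" by (simp add: power2_eq_square)
        then show ?thesis by (simp only: mult_ac times_divide_eq_right)
      qed
      also have "\<dots> = \<bar>K\<bar> * \<bar>t\<bar>" using elim(2) by simp
      finally show ?case .
    qed
    show "((\<lambda>t. \<bar>K\<bar> * \<bar>t\<bar>) \<longlongrightarrow> 0) (at (0::real))"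
      using tendsto_mult[OF tendsto_const tendsto_rabs[OF tendsto_ident_at], of "\<bar>K\<bar>" 0 UNIV] by simp
  qed
  then have "((\<lambda>t. (f t - f 0) / (t - 0)) \<longlongrightarrow> D) (at 0)" by (rule LIM_zero_cancel)
  then show ?thesis by (simp add: has_field_derivative_iff)
qed

lemma eventually_abs_less_at_0: "e > 0 \<Longrightarrow> eventually (\<lambda>t::real. \<bar>t\<bar> < e) (at 0)"
  unfolding eventually_at by (intro exI[of _ e]) (auto simp: dist_real_def)

section \<open>Vectors and matrices indexed by \<open>nat\<close>\<close>

definition l1norm :: "nat \<Rightarrow> (nat \<Rightarrow> real) \<Rightarrow> real" where
  "l1norm d h = (\<Sum>k<d. \<bar>h k\<bar>)"

definition coord_vec :: "nat \<Rightarrow> real \<Rightarrow> nat \<Rightarrow> real" where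
  "coord_vec q t = (\<lambda>p. if p = q then t else 0)"

lemma l1norm_nonneg: "l1norm d h \<ge> 0"
  unfolding l1norm_def by (simp add: sum_nonneg)

lemma abs_le_l1norm: "k < d \<Longrightarrow> \<bar>h k\<bar> \<le> l1norm d h"
  unfolding l1norm_def by (rule member_le_sum) auto

lemma l1norm_triangle: "l1norm d (y - z) \<le> l1norm d (y - x) + l1norm d (x - z)"
  unfolding l1norm_def sum.distrib[symmetric] by (intro sum_mono) auto

lemma l1norm_le_of_coordwise:
  assumes "\<forall>k<d. \<bar>y k - x k\<bar> < \<rho>"
  shows "l1norm d (y - x) \<le> real d * \<rho>"
proof -
  have "l1norm d (y - x) \<le> (\<Sum>k<d. \<rho>)" unfolding l1norm_def using assms by (intro sum_mono) auto
  then show ?thesis by simp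
qed

lemma sum_squares_le_l1norm_sq: "(\<Sum>k<d. (h k)\<^sup>2) \<le> (l1norm d h)\<^sup>2"
proof -
  have "(\<Sum>k<d. (h k)\<^sup>2) = (\<Sum>k<d. \<bar>h k\<bar> * \<bar>h k\<bar>)" by (simp add: power2_eq_square abs_mult[symmetric])
  also have "\<dots> \<le> (\<Sum>k<d. \<bar>h k\<bar> * l1norm d h)"
    by (rule sum_mono) (rule mult_left_mono[OF abs_le_l1norm], auto)
  also have "\<dots> = (l1norm d h)\<^sup>2" by (simp add: l1norm_def sum_distrib_right power2_eq_square)
  finally show ?thesis .
qed

lemma abs_sum_mult_le:
  fixes a b :: "nat \<Rightarrow> real"
  assumes "\<forall>j<d. \<bar>b j\<bar> \<le> M"
  shows "\<bar>\<Sum>j<d. a j * b j\<bar> \<le> (\<Sum>j<d. \<bar>a j\<bar>) * M"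
proof -
  have "\<bar>\<Sum>j<d. a j * b j\<bar> \<le> (\<Sum>j<d. \<bar>a j\<bar> * \<bar>b j\<bar>)" by (rule order.trans[OF sum_abs]) (simp add: abs_mult)
  also have "\<dots> \<le> (\<Sum>j<d. \<bar>a j\<bar> * M)" using assms by (intro sum_mono mult_left_mono) auto
  finally show ?thesis by (simp add: sum_distrib_right)
qed

lemma abs_ip_le: "\<bar>ip d h v\<bar> \<le> l1norm d h * (\<Sum>k<d. \<bar>v k\<bar>)"
  using abs_sum_mult_le[of d h "l1norm d h" v] abs_le_l1norm[of _ d h]
  unfolding ip_def by (simp add: mult.commute)

lemma ip_add: "ip d (a + b) v = ip d a v + ip d b v"
  unfolding ip_def by (simp add: sum.distrib algebra_simps)

lemma ip_coord_vec:
  assumes "q < d"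
  shows "ip d (coord_vec q t) v = t * v q"
proof -
  have "ip d (coord_vec q t) v = (\<Sum>k<d. if k = q then t * v k else 0)"
    unfolding ip_def coord_vec_def by (rule sum.cong) auto
  then show ?thesis using assms by simp
qed

lemma l1norm_coord_vec:
  assumes "q < d"
  shows "l1norm d (coord_vec q t) = \<bar>t\<bar>"
proof -
  have "l1norm d (coord_vec q t) = (\<Sum>k<d. if k = q then \<bar>t\<bar> else 0)"
    unfolding l1norm_def coord_vec_def by (rule sum.cong) auto
  then show ?thesis using assms by simp
qed

lemma coord_vec_zero [simp]: "coord_vec q 0 = 0"
  unfolding coord_vec_def by auto

lemma coord_vec_in_vecs: "q < d \<Longrightarrow> coord_vec q t \<in> vecs d"
  unfolding vecs_def coord_vec_def by auto

lemma vecs_add: "a \<in> vecs d \<Longrightarrow> b \<in> vecs d \<Longrightarrow> a + b \<in> vecs d"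
  unfolding vecs_def by auto

lemma vecs_diff: "a \<in> vecs d \<Longrightarrow> b \<in> vecs d \<Longrightarrow> a - b \<in> vecs d"
  unfolding vecs_def by auto

lemma open_in_vecs_l1norm_ball:
  assumes "open_in_vecs d T" "\<theta>0 \<in> T"
  shows "\<exists>e>0. \<forall>h\<in>vecs d. l1norm d h < e \<longrightarrow> \<theta>0 + h \<in> T"
proof -
  obtain e where e: "e > 0" "\<forall>\<theta>'\<in>vecs d. (\<Sum>k<d. (\<theta>' k - \<theta>0 k)\<^sup>2) < e \<longrightarrow> \<theta>' \<in> T"
    using assms unfolding open_in_vecs_def by blast
  have v: "\<theta>0 \<in> vecs d" using assms unfolding open_in_vecs_def by blast
  show ?thesis
  proof (intro exI[of _ "sqrt e"] conjI ballI impI)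
    show "sqrt e > 0" using e by simp
    fix h assume h: "h \<in> vecs d" "l1norm d h < sqrt e"
    have "(\<Sum>k<d. ((\<theta>0 + h) k - \<theta>0 k)\<^sup>2) \<le> (l1norm d h)\<^sup>2"
      using sum_squares_le_l1norm_sq[where d=d and h=h] by simp
    also have "\<dots> < e"
      using h(2) l1norm_nonneg[of d h]
      by (metis e(1) less_eq_real_def real_sqrt_less_iff real_sqrt_pow2 power2_less_imp_less
          real_sqrt_ge_zero power_strict_mono zero_less_numeral)
    finally show "\<theta>0 + h \<in> T" using e(2) vecs_add[OF v h(1)] by blast
  qed
qed

lemma eventually_coord_vec_in:
  assumes "open_in_vecs d T" "\<theta>0 \<in> T" "q < d"
  shows "eventually (\<lambda>t. \<theta>0 + coord_vec q t \<in> T) (at 0)"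
proof -
  obtain e where e: "e > 0" "\<forall>h\<in>vecs d. l1norm d h < e \<longrightarrow> \<theta>0 + h \<in> T"
    using open_in_vecs_l1norm_ball[OF assms(1,2)] by blast
  then have "eventually (\<lambda>t. \<bar>t\<bar> < e) (at 0)" by (intro eventually_abs_less_at_0)
  then show ?thesis
  proof eventually_elim
    case (elim t)
    then show ?case using e coord_vec_in_vecs[OF assms(3)] l1norm_coord_vec[OF assms(3)] by auto
  qed
qed

lemma open_coordwise_ball: "open {y::nat\<Rightarrow>real. \<forall>k<d. \<bar>y k - x k\<bar> < \<rho>}"
proof -
  have "{y::nat\<Rightarrow>real. \<forall>k<d. \<bar>y k - x k\<bar> < \<rho>} = {f. \<forall>i\<in>{..<d}. f (id i) \<in> ball (x i) \<rho>}"
    by (auto simp: dist_real_def abs_minus_commute)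
  then show ?thesis using product_topology_basis'[of "{..<d}" "\<lambda>i. ball (x i) \<rho>" id] by simp
qed

lemma open_fun_contains_box:
  fixes T :: "(nat \<Rightarrow> real) set"
  assumes "open T" "x \<in> T"
  shows "\<exists>r>0. \<exists>I. finite I \<and> (\<forall>y. (\<forall>i\<in>I. \<bar>y i - x i\<bar> < r) \<longrightarrow> y \<in> T)"
proof -
  obtain U where U: "finite {i. U i \<noteq> UNIV}" "\<forall>i. open (U i)" "x \<in> Pi\<^sub>E UNIV U" "Pi\<^sub>E UNIV U \<subseteq> T"
    using assms unfolding open_fun_def openin_product_topology_alt by force
  define I where "I = {i. U i \<noteq> UNIV}"
  have "\<forall>i\<in>I. \<exists>r>0. \<forall>y. \<bar>y - x i\<bar> < r \<longrightarrow> y \<in> U i"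
  proof
    fix i
    have "x i \<in> U i" using U(3) by auto
    then obtain e where "e > 0" "\<forall>y. dist y (x i) < e \<longrightarrow> y \<in> U i"
      using U(2) unfolding open_dist by blast
    then show "\<exists>r>0. \<forall>y. \<bar>y - x i\<bar> < r \<longrightarrow> y \<in> U i" by (auto simp: dist_real_def)
  qed
  then obtain rr where rr: "\<forall>i\<in>I. rr i > 0 \<and> (\<forall>y. \<bar>y - x i\<bar> < rr i \<longrightarrow> y \<in> U i)"
    by metis
  define r where "r = Min (insert 1 (rr ` I))"
  have fin: "finite I" using U(1) unfolding I_def .
  have r: "r > 0" unfolding r_def using fin rr by (subst Min_gr_iff) auto
  have rle: "r \<le> rr i" if "i \<in> I" for i unfolding r_def using fin that by (intro Min_le) auto
  show ?thesis
  proof (intro exI[of _ r] exI[of _ I] conjI allI impI r fin)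
    fix y assume y: "\<forall>i\<in>I. \<bar>y i - x i\<bar> < r"
    have "y \<in> Pi\<^sub>E UNIV U"
    proof (simp add: PiE_iff, intro allI)
      fix i show "y i \<in> U i"
      proof (cases "i \<in> I")
        case True then show ?thesis using rr y rle[OF True] by fastforce
      next
        case False then show ?thesis unfolding I_def by auto
      qed
    qed
    then show "y \<in> T" using U(4) by blast
  qed
qed

lemma Euclidean_space_eq_vecs: "Euclidean_space d = top_of_set (vecs d)"
  by (simp add: Euclidean_space_def euclidean_product_topology vecs_def)

lemma openin_Euclidean_spaceI:
  assumes U: "U \<subseteq> vecs d"
    and balls: "\<forall>x\<in>U. \<exists>\<rho>>0. \<forall>y\<in>vecs d. (\<forall>k<d. \<bar>y k - x k\<bar> < \<rho>) \<longrightarrow> y \<in> U"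
  shows "openin (Euclidean_space d) U"
proof -
  obtain \<rho> where \<rho>: "\<forall>x\<in>U. \<rho> x > 0 \<and> (\<forall>y\<in>vecs d. (\<forall>k<d. \<bar>y k - x k\<bar> < \<rho> x) \<longrightarrow> y \<in> U)"
    using balls by metis
  define T where "T = (\<Union>x\<in>U. {y. \<forall>k<d. \<bar>y k - x k\<bar> < \<rho> x})"
  have "open T" unfolding T_def by (intro open_UN ballI open_coordwise_ball)
  moreover have "U = vecs d \<inter> T"
  proof
    show "U \<subseteq> vecs d \<inter> T" using U \<rho> unfolding T_def by fastforce
    show "vecs d \<inter> T \<subseteq> U" using \<rho> unfolding T_def by blast
  qed
  ultimately show ?thesis unfolding Euclidean_space_eq_vecs openin_open by blast
qed

text \<open>Since \<open>mat_inv\<close> is defined by a definite description, the entries outside the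
  \<open>n \<times> n\<close> block must be normalised to make the inverse unique.\<close>
lemma mat_is_inv_restrict:
  assumes "mat_is_inv n A B"
  shows "mat_is_inv n A (\<lambda>k l. if k < n \<and> l < n then B k l else 0)"
proof -
  have "mat_mult n A (\<lambda>k l. if k < n \<and> l < n then B k l else 0) k l = mat_mult n A B k l" if "l < n" for k l
    unfolding mat_mult_def using that by (intro sum.cong) auto
  moreover have "mat_mult n (\<lambda>k l. if k < n \<and> l < n then B k l else 0) A k l = mat_mult n B A k l"
    if "k < n" for k l
    unfolding mat_mult_def using that by (intro sum.cong) auto
  ultimately show ?thesis using assms unfolding mat_is_inv_def by auto
qed

lemma mat_is_inv_apply:
  assumes "mat_is_inv d H Hinv" "k < d"
  shows "(\<Sum>j<d. Hinv k j * (\<Sum>p<d. D p * H j p)) = D k"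
proof -
  have "(\<Sum>j<d. Hinv k j * (\<Sum>p<d. D p * H j p)) = (\<Sum>p<d. D p * (\<Sum>j<d. Hinv k j * H j p))"
    by (simp add: sum_distrib_left sum_distrib_right mult_ac) (rule sum.swap)
  also have "\<dots> = (\<Sum>p<d. D p * (if k = p then 1 else 0))"
    using assms unfolding mat_is_inv_def mat_mult_def by (intro sum.cong) auto
  also have "\<dots> = D k" using assms(2) by (simp add: if_distrib cong: if_cong)
  finally show ?thesis .
qed

lemma mat_is_inv_unique:
  assumes "mat_is_inv n A B1" "mat_is_inv n A B2" "k < n" "l < n"
  shows "B1 k l = B2 k l"
proof -
  have "B1 k l = (\<Sum>m<n. B1 k m * (if m = l then 1 else 0))"
    using assms(4) by (simp add: if_distrib cong: if_cong)
  also have "\<dots> = (\<Sum>m<n. B1 k m * (\<Sum>p<n. A m p * B2 p l))"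
    using assms(2,4) unfolding mat_is_inv_def mat_mult_def by (intro sum.cong) auto
  also have "\<dots> = (\<Sum>p<n. (\<Sum>m<n. B1 k m * A m p) * B2 p l)"
    by (simp add: sum_distrib_left sum_distrib_right mult_ac) (rule sum.swap)
  also have "\<dots> = (\<Sum>p<n. (if k = p then 1 else 0) * B2 p l)"
    using assms(1,3) unfolding mat_is_inv_def mat_mult_def by (intro sum.cong) auto
  also have "\<dots> = B2 k l" using assms(3) by (simp add: if_distrib[of "\<lambda>x. x * B2 _ l"] cong: if_cong)
  finally show ?thesis .
qed

lemma mat_inv_is_inv:
  assumes "invertible_n n A"
  shows "mat_is_inv n A (mat_inv n A)"
proof -
  obtain B where "mat_is_inv n A B" using assms unfolding invertible_n_def by blast
  define B' where "B' = (\<lambda>k l. if k < n \<and> l < n then B k l else 0)"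
  have B': "mat_is_inv n A B' \<and> (\<forall>k l. n \<le> k \<or> n \<le> l \<longrightarrow> B' k l = 0)"
    using mat_is_inv_restrict[OF \<open>mat_is_inv n A B\<close>] unfolding B'_def by auto
  have "mat_inv n A = B'"
    unfolding mat_inv_def
  proof (rule the_equality)
    fix C assume C: "mat_is_inv n A C \<and> (\<forall>k l. n \<le> k \<or> n \<le> l \<longrightarrow> C k l = 0)"
    show "C = B'"
    proof (intro ext)
      fix k l show "C k l = B' k l"
        using C B' mat_is_inv_unique[of n A C B' k l] by (cases "k < n \<and> l < n") auto
    qed
  qed (rule B')
  then show ?thesis using B' by simp
qed

lemma mat_is_inv_solution_error:
  assumes "mat_is_inv d H Hinv" "k < d" "\<forall>j<d. \<bar>(\<Sum>p<d. D p * H j p) - c j\<bar> \<le> \<epsilon>"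
  shows "\<bar>D k - (\<Sum>j<d. Hinv k j * c j)\<bar> \<le> (\<Sum>j<d. \<bar>Hinv k j\<bar>) * \<epsilon>"
proof -
  have "D k - (\<Sum>j<d. Hinv k j * c j) = (\<Sum>j<d. Hinv k j * ((\<Sum>p<d. D p * H j p) - c j))"
    using mat_is_inv_apply[OF assms(1,2), of D] by (simp add: right_diff_distrib sum_subtractf)
  then show ?thesis using abs_sum_mult_le[OF assms(3)] by simp
qed

section \<open>Moments of an exponential family\<close>

lemma borel_measurable_ip:
  assumes "\<forall>k<d. (\<lambda>x. s x k) \<in> borel_measurable M"
  shows "(\<lambda>x. ip d \<theta> (s x)) \<in> borel_measurable M"
  unfolding ip_def using assms by (intro borel_measurable_sum borel_measurable_times) auto

lemma borel_measurable_l1norm_stat: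
  fixes s :: "'a \<Rightarrow> nat \<Rightarrow> real"
  assumes "\<forall>k<d. (\<lambda>x. s x k) \<in> borel_measurable M"
  shows "(\<lambda>x. \<Sum>k<d. \<bar>s x k\<bar>) \<in> borel_measurable M"
  using assms by (intro borel_measurable_sum borel_measurable_abs) auto

lemma exp_family_measurable: "exp_family M d s \<Longrightarrow> \<forall>k<d. (\<lambda>x. s x k) \<in> borel_measurable M"
  unfolding exp_family_def by blast

lemma exp_family_open: "exp_family M d s \<Longrightarrow> open_in_vecs d (ef_Theta M d s)"
  unfolding exp_family_def by blast

lemma exp_family_invertible_cov:
  "exp_family M d s \<Longrightarrow> \<theta> \<in> ef_Theta M d s \<Longrightarrow> invertible_n d (ef_cov M d s \<theta> s s)"
  unfolding exp_family_def by blast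

lemma ef_Theta_subset_vecs: "ef_Theta M d s \<subseteq> vecs d"
  unfolding ef_Theta_def by auto

lemma ef_mean_in_vecs: "ef_mean M d s \<theta> \<in> vecs d"
  unfolding ef_mean_def vecs_def by auto

lemma integrable_exp_ip:
  assumes "\<forall>k<d. (\<lambda>x. s x k) \<in> borel_measurable M" "\<theta> \<in> ef_Theta M d s"
  shows "integrable M (\<lambda>x. exp (ip d \<theta> (s x)))"
proof (rule integrableI_nonneg)
  show "(\<lambda>x. exp (ip d \<theta> (s x))) \<in> borel_measurable M"
    using borel_measurable_ip[OF assms(1)] by measurable
  show "(\<integral>\<^sup>+ x. ennreal (exp (ip d \<theta> (s x))) \<partial>M) < \<infinity>"
    using assms(2) unfolding ef_Theta_def ef_Z_def by simp
qed simp

lemma ef_E_eq_quotient: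
  "ef_E M d s \<theta> g = (\<integral>x. g x * exp (ip d \<theta> (s x)) \<partial>M) / (\<integral>x. exp (ip d \<theta> (s x)) \<partial>M)"
  unfolding ef_E_def ef_dens_def by (simp add: times_divide_eq_right)

text \<open>The normalizer cannot vanish: otherwise the density, hence the covariance, would be
  zero, contradicting its invertibility (which needs \<open>d > 0\<close>).\<close>
lemma ef_normalizer_pos:
  assumes EF: "exp_family M d s" and d: "d > 0" and th: "\<theta> \<in> ef_Theta M d s"
  shows "(\<integral>x. exp (ip d \<theta> (s x)) \<partial>M) > 0"
proof (rule ccontr)
  assume "\<not> ?thesis"
  moreover have "(\<integral>x. exp (ip d \<theta> (s x)) \<partial>M) \<ge> 0" by (rule integral_nonneg_AE) auto
  ultimately have "ef_dens M d s \<theta> = (\<lambda>x. 0)" unfolding ef_dens_def by auto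
  then have "ef_cov M d s \<theta> s s = (\<lambda>k l. 0)" unfolding ef_cov_def ef_E_def by simp
  then obtain B where "mat_is_inv d (\<lambda>k l. 0) B"
    using exp_family_invertible_cov[OF EF th] unfolding invertible_n_def by auto
  then have "mat_mult d (\<lambda>k l. 0) B 0 0 = 1" using d unfolding mat_is_inv_def by auto
  then show False unfolding mat_mult_def by simp
qed

lemma exp_l1_le_sum_exp:
  fixes a :: "nat \<Rightarrow> real"
  assumes "d > 0" "c > 0"
  shows "exp (c / real d * (\<Sum>k<d. \<bar>a k\<bar>)) \<le> (\<Sum>k<d. exp (c * a k) + exp (- (c * a k)))"
proof -
  obtain k0 where k0: "k0 < d" "\<forall>k<d. \<bar>a k\<bar> \<le> \<bar>a k0\<bar>"
  proof -
    have "finite ((\<lambda>k. \<bar>a k\<bar>) ` {..<d})" "(\<lambda>k. \<bar>a k\<bar>) ` {..<d} \<noteq> {}" using assms by auto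
    then obtain k0 where "k0 \<in> {..<d}" "\<bar>a k0\<bar> = Max ((\<lambda>k. \<bar>a k\<bar>) ` {..<d})"
      using Max_in by (metis (no_types, lifting) imageE)
    then show ?thesis using that by (metis Max_ge \<open>finite _\<close> imageI lessThan_iff)
  qed
  have "(\<Sum>k<d. \<bar>a k\<bar>) \<le> (\<Sum>k<d. \<bar>a k0\<bar>)" by (rule sum_mono) (use k0 in auto)
  then have "c / real d * (\<Sum>k<d. \<bar>a k\<bar>) \<le> c / real d * (real d * \<bar>a k0\<bar>)"
    using assms by (intro mult_left_mono) auto
  also have "\<dots> = c * \<bar>a k0\<bar>" using assms by simp
  finally have "exp (c / real d * (\<Sum>k<d. \<bar>a k\<bar>)) \<le> exp (c * \<bar>a k0\<bar>)" by simp
  also have "\<dots> \<le> exp (c * a k0) + exp (- (c * a k0))"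
    by (cases "a k0 \<ge> 0") (auto simp: add_increasing add_increasing2)
  also have "\<dots> \<le> (\<Sum>k<d. exp (c * a k) + exp (- (c * a k)))"
    using k0(1) by (intro member_le_sum[where f="\<lambda>k. exp (c * a k) + exp (- (c * a k))"])
      (auto intro: add_nonneg_nonneg)
  finally show ?thesis .
qed

text \<open>Openness of the natural parameter space gives an exponential moment of \<open>\<bar>s\<bar>\<^sub>1\<close>:
  each \<open>exp (\<plusminus>c s\<^sub>k)\<close> is integrable against \<open>exp \<langle>\<theta>\<^sub>0, s\<rangle>\<close> because \<open>\<theta>\<^sub>0 \<plusminus> c e\<^sub>k\<close> is
  still a parameter.\<close>
lemma exp_family_exp_moment:
  assumes meas: "\<forall>k<d. (\<lambda>x. s x k) \<in> borel_measurable M"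
    and opn: "open_in_vecs d (ef_Theta M d s)" and th: "\<theta>0 \<in> ef_Theta M d s" and d: "d > 0"
  shows "\<exists>\<delta>>0. integrable M (\<lambda>x. exp (ip d \<theta>0 (s x)) * exp (\<delta> * (\<Sum>k<d. \<bar>s x k\<bar>)))"
proof -
  obtain e where e: "e > 0" "\<forall>h\<in>vecs d. l1norm d h < e \<longrightarrow> \<theta>0 + h \<in> ef_Theta M d s"
    using open_in_vecs_l1norm_ball[OF opn th] by blast
  define c where "c = e/2"
  have c: "c > 0" "c < e" using e by (auto simp: c_def)
  have int1: "integrable M (\<lambda>x. exp (ip d \<theta>0 (s x)) * exp (\<sigma> * (c * s x k)))"
    if "k < d" "\<sigma> \<in> {1, -1}" for k \<sigma>
  proof -
    have "\<theta>0 + coord_vec k (\<sigma> * c) \<in> ef_Theta M d s"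
      using e(2) coord_vec_in_vecs[OF that(1)] l1norm_coord_vec[OF that(1)] that c by auto
    from integrable_exp_ip[OF meas this]
    show ?thesis using that by (simp add: ip_add ip_coord_vec exp_add algebra_simps)
  qed
  define G where "G x = exp (ip d \<theta>0 (s x)) * (\<Sum>k<d. exp (c * s x k) + exp (- (c * s x k)))" for x
  have "integrable M G"
    unfolding G_def sum_distrib_left distrib_left
    using int1[of _ 1] int1[of _ "-1"] by (intro Bochner_Integration.integrable_sum
        Bochner_Integration.integrable_add) auto
  then have "integrable M (\<lambda>x. exp (ip d \<theta>0 (s x)) * exp (c / real d * (\<Sum>k<d. \<bar>s x k\<bar>)))"
  proof (rule Bochner_Integration.integrable_bound)
    show "(\<lambda>x. exp (ip d \<theta>0 (s x)) * exp (c / real d * (\<Sum>k<d. \<bar>s x k\<bar>))) \<in> borel_measurable M"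
      using borel_measurable_ip[OF meas] borel_measurable_l1norm_stat[OF meas] by measurable
    show "AE x in M. norm (exp (ip d \<theta>0 (s x)) * exp (c / real d * (\<Sum>k<d. \<bar>s x k\<bar>))) \<le> norm (G x)"
      using exp_l1_le_sum_exp[OF d c(1)] unfolding G_def
      by (intro AE_I2) (auto intro!: mult_left_mono order.trans[OF _ abs_ge_self])
  qed
  then show ?thesis using c d by (intro exI[of _ "c / real d"]) auto
qed

locale exp_moment =
  fixes M :: "'a measure" and d :: nat and s :: "'a \<Rightarrow> nat \<Rightarrow> real"
    and \<theta>0 :: "nat \<Rightarrow> real" and \<delta> :: real
  assumes measurable_stat: "\<forall>k<d. (\<lambda>x. s x k) \<in> borel_measurable M"
    and delta_pos: "\<delta> > 0"
    and integrable_moment: "integrable M (\<lambda>x. exp (ip d \<theta>0 (s x)) * exp (\<delta> * (\<Sum>k<d. \<bar>s x k\<bar>)))"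
begin

abbreviation "S x \<equiv> (\<Sum>k<d. \<bar>s x k\<bar>)"
abbreviation "E0 x \<equiv> exp (ip d \<theta>0 (s x))"
definition "K = (6/\<delta>)^3 * exp (\<delta>/2)"
definition "moment = (\<integral>x. E0 x * exp (\<delta> * S x) \<partial>M)"

lemma S_nonneg: "S x \<ge> 0" by (simp add: sum_nonneg)

lemma abs_stat_le: "k < d \<Longrightarrow> \<bar>s x k\<bar> \<le> 1 + S x"
  using member_le_sum[of k "{..<d}" "\<lambda>k. \<bar>s x k\<bar>"] by auto

lemma K_pos: "K > 0" unfolding K_def using delta_pos by simp

lemma moment_nonneg: "moment \<ge> 0" unfolding moment_def by (rule integral_nonneg_AE) auto

lemma measurable_E0 [measurable]: "(\<lambda>x. E0 x) \<in> borel_measurable M"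
  using borel_measurable_ip[OF measurable_stat] by measurable

lemma measurable_S [measurable]: "(\<lambda>x. S x) \<in> borel_measurable M"
  using borel_measurable_l1norm_stat[OF measurable_stat] .

lemma integrable_dominated:
  assumes "f \<in> borel_measurable M" "\<forall>x\<in>space M. \<bar>f x\<bar> \<le> C * (E0 x * exp (\<delta> * S x))"
  shows "integrable M f"
  using assms
  by (intro Bochner_Integration.integrable_bound[OF integrable_mult_right[OF integrable_moment, of C]]
      AE_I2) (auto intro: order.trans[OF _ abs_ge_self])

lemma cube_exp_le: "(1 + S x)^3 * exp (\<delta> * S x / 2) \<le> K * exp (\<delta> * S x)"
proof -
  have "(1 + S x)^3 * exp (\<delta> * S x / 2) \<le> (K * exp (\<delta> * S x / 2)) * exp (\<delta> * S x / 2)"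
    using one_plus_cube_le_exp[OF S_nonneg delta_pos, of x] unfolding K_def
    by (intro mult_right_mono) auto
  also have "\<dots> = K * exp (\<delta> * S x)" by (simp add: mult.assoc exp_add[symmetric])
  finally show ?thesis .
qed

lemma integrable_shifted:
  assumes g: "g \<in> borel_measurable M" "\<forall>x\<in>space M. \<bar>g x\<bar> \<le> 1 + S x" and h: "l1norm d h \<le> \<delta>/2"
  shows "integrable M (\<lambda>x. g x * exp (ip d (\<theta>0 + h) (s x)))"
proof (rule integrable_dominated)
  show "(\<lambda>x. g x * exp (ip d (\<theta>0 + h) (s x))) \<in> borel_measurable M"
    using g(1) borel_measurable_ip[OF measurable_stat, of "\<theta>0 + h"] by measurable
  show "\<forall>x\<in>space M. \<bar>g x * exp (ip d (\<theta>0 + h) (s x))\<bar> \<le> K * (E0 x * exp (\<delta> * S x))"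
  proof
    fix x assume x: "x \<in> space M"
    have "ip d h (s x) \<le> l1norm d h * S x" using abs_ip_le[of d h "s x"] by linarith
    also have "\<dots> \<le> \<delta>/2 * S x" using h S_nonneg[of x] by (intro mult_right_mono) auto
    finally have u: "ip d h (s x) \<le> \<delta> * S x / 2" by simp
    have "(1 + S x)^1 \<le> (1 + S x)^3" by (rule power_increasing) (use S_nonneg[of x] in auto)
    then have "\<bar>g x\<bar> \<le> (1 + S x)^3" using g(2) x by auto
    have "\<bar>g x * exp (ip d (\<theta>0 + h) (s x))\<bar> = E0 x * (\<bar>g x\<bar> * exp (ip d h (s x)))"
      by (simp add: ip_add exp_add abs_mult mult_ac)
    also have "\<dots> \<le> E0 x * ((1 + S x)^3 * exp (\<delta> * S x / 2))"
      using \<open>\<bar>g x\<bar> \<le> (1 + S x)^3\<close> u S_nonneg[of x] by (intro mult_left_mono mult_mono) auto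
    also have "\<dots> \<le> E0 x * (K * exp (\<delta> * S x))" by (rule mult_left_mono[OF cube_exp_le]) simp
    finally show "\<bar>g x * exp (ip d (\<theta>0 + h) (s x))\<bar> \<le> K * (E0 x * exp (\<delta> * S x))"
      by (simp add: mult_ac)
  qed
qed

lemma integrable_base:
  assumes "g \<in> borel_measurable M" "\<forall>x\<in>space M. \<bar>g x\<bar> \<le> 1 + S x"
  shows "integrable M (\<lambda>x. g x * E0 x)"
  using integrable_shifted[OF assms, of 0] delta_pos by (simp add: l1norm_def)

lemma integrable_times_stat:
  assumes g: "g \<in> borel_measurable M" "\<forall>x\<in>space M. \<bar>g x\<bar> \<le> 1 + S x" and p: "p < d"
  shows "integrable M (\<lambda>x. g x * s x p * E0 x)"
proof (rule integrable_dominated)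
  show "(\<lambda>x. g x * s x p * E0 x) \<in> borel_measurable M"
    using g(1) measurable_stat p by (intro borel_measurable_times) auto
  show "\<forall>x\<in>space M. \<bar>g x * s x p * E0 x\<bar> \<le> K * (E0 x * exp (\<delta> * S x))"
  proof
    fix x assume x: "x \<in> space M"
    have "\<bar>g x * s x p\<bar> \<le> (1 + S x)^2"
      unfolding abs_mult power2_eq_square using g(2) x abs_stat_le[OF p] by (intro mult_mono) auto
    also have "\<dots> \<le> (1 + S x)^3" by (rule power_increasing) (use S_nonneg[of x] in auto)
    also have "\<dots> \<le> (1 + S x)^3 * exp (\<delta> * S x / 2)"
    proof -
      have "1 \<le> exp (\<delta> * S x / 2)" using delta_pos S_nonneg[of x] by simp
      then show ?thesis
        using S_nonneg[of x] mult_left_mono[of 1 "exp (\<delta> * S x / 2)" "(1 + S x)^3"] by simp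
    qed
    also have "\<dots> \<le> K * exp (\<delta> * S x)" by (rule cube_exp_le)
    finally have "\<bar>g x * s x p\<bar> * E0 x \<le> K * exp (\<delta> * S x) * E0 x" by (intro mult_right_mono) auto
    then show "\<bar>g x * s x p * E0 x\<bar> \<le> K * (E0 x * exp (\<delta> * S x))" by (simp add: abs_mult mult_ac)
  qed
qed

text \<open>The Taylor remainder of \<open>exp\<close> under the integral is dominated by
  \<open>K exp \<langle>\<theta>\<^sub>0, s\<rangle> exp (\<delta> \<bar>s\<bar>\<^sub>1)\<close>.\<close>
lemma integral_taylor:
  assumes g: "g \<in> borel_measurable M" "\<forall>x\<in>space M. \<bar>g x\<bar> \<le> 1 + S x" and h: "l1norm d h \<le> \<delta>/2"
  shows "\<bar>(\<integral>x. g x * exp (ip d (\<theta>0 + h) (s x)) \<partial>M) - (\<integral>x. g x * E0 x \<partial>M)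
          - (\<Sum>p<d. h p * (\<integral>x. g x * s x p * E0 x \<partial>M))\<bar> \<le> K * moment * (l1norm d h)\<^sup>2"
proof -
  define R where "R x = g x * exp (ip d (\<theta>0 + h) (s x)) - g x * E0 x - (\<Sum>p<d. h p * (g x * s x p * E0 x))"
    for x
  have lin: "integrable M (\<lambda>x. \<Sum>p<d. h p * (g x * s x p * E0 x))"
    using integrable_times_stat[OF g] by (intro Bochner_Integration.integrable_sum) auto
  have "(\<integral>x. g x * exp (ip d (\<theta>0 + h) (s x)) \<partial>M) - (\<integral>x. g x * E0 x \<partial>M)
          - (\<Sum>p<d. h p * (\<integral>x. g x * s x p * E0 x \<partial>M)) = (\<integral>x. R x \<partial>M)"
    unfolding R_def using lin integrable_shifted[OF g h] integrable_base[OF g] integrable_times_stat[OF g]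
    by (simp add: Bochner_Integration.integral_diff Bochner_Integration.integral_sum)
  also have "\<bar>\<dots>\<bar> \<le> (\<integral>x. (l1norm d h)\<^sup>2 * K * (E0 x * exp (\<delta> * S x)) \<partial>M)"
  proof (rule order.trans[OF _ integral_mono])
    show "\<bar>\<integral>x. R x \<partial>M\<bar> \<le> (\<integral>x. \<bar>R x\<bar> \<partial>M)" using integral_norm_bound[of M R] by simp
    show "integrable M (\<lambda>x. \<bar>R x\<bar>)"
      unfolding R_def using lin integrable_shifted[OF g h] integrable_base[OF g] by auto
    show "integrable M (\<lambda>x. (l1norm d h)\<^sup>2 * K * (E0 x * exp (\<delta> * S x)))"
      using integrable_moment by (intro integrable_mult_right) auto
  next
    fix x assume x: "x \<in> space M"
    define u where "u = ip d h (s x)"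
    have ub: "\<bar>u\<bar> \<le> l1norm d h * S x" unfolding u_def by (rule abs_ip_le)
    have "(\<Sum>p<d. h p * (g x * s x p * E0 x)) = g x * E0 x * u"
      unfolding u_def ip_def by (simp add: sum_distrib_left sum_distrib_right mult_ac)
    then have "R x = g x * E0 x * (exp u - 1 - u)"
      unfolding R_def u_def by (simp add: ip_add exp_add algebra_simps)
    then have "\<bar>R x\<bar> = \<bar>g x\<bar> * E0 x * \<bar>exp u - 1 - u\<bar>" by (simp add: abs_mult)
    also have "\<dots> \<le> (1 + S x) * E0 x * ((l1norm d h)\<^sup>2 * (S x)\<^sup>2 * exp (\<delta> * S x / 2))"
    proof (intro mult_mono)
      have "\<bar>exp u - 1 - u\<bar> \<le> u\<^sup>2 * exp \<bar>u\<bar>" by (rule abs_exp_minus_one_minus_le)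
      also have "\<dots> \<le> (l1norm d h * S x)\<^sup>2 * exp (\<delta> * S x / 2)"
      proof (intro mult_mono)
        show "u\<^sup>2 \<le> (l1norm d h * S x)\<^sup>2" using ub by (simp add: abs_le_square_iff[symmetric] abs_le_iff)
        have "l1norm d h * S x \<le> \<delta>/2 * S x" using h S_nonneg[of x] by (intro mult_right_mono) auto
        then show "exp \<bar>u\<bar> \<le> exp (\<delta> * S x / 2)" using ub by simp
      qed auto
      finally show "\<bar>exp u - 1 - u\<bar> \<le> (l1norm d h)\<^sup>2 * (S x)\<^sup>2 * exp (\<delta> * S x / 2)"
        by (simp add: power_mult_distrib)
    qed (use g x in auto)
    also have "\<dots> = (l1norm d h)\<^sup>2 * E0 x * ((1 + S x) * (S x)\<^sup>2 * exp (\<delta> * S x / 2))"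
      by (simp add: mult_ac)
    also have "\<dots> \<le> (l1norm d h)\<^sup>2 * E0 x * (K * exp (\<delta> * S x))"
    proof (rule mult_left_mono)
      have "S x * S x \<le> (1 + S x) * (1 + S x)" using S_nonneg[of x] by (intro mult_mono) auto
      then have "(1 + S x) * (S x)\<^sup>2 \<le> (1 + S x)^3"
        using S_nonneg[of x] mult_left_mono[of "S x * S x" "(1 + S x) * (1 + S x)" "1 + S x"]
        by (simp add: power2_eq_square power3_eq_cube mult_ac)
      then have "(1 + S x) * (S x)\<^sup>2 * exp (\<delta> * S x / 2) \<le> (1 + S x)^3 * exp (\<delta> * S x / 2)"
        by (intro mult_right_mono) auto
      then show "(1 + S x) * (S x)\<^sup>2 * exp (\<delta> * S x / 2) \<le> K * exp (\<delta> * S x)"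
        using cube_exp_le[of x] by linarith
    qed simp
    finally show "\<bar>R x\<bar> \<le> (l1norm d h)\<^sup>2 * K * (E0 x * exp (\<delta> * S x))" by (simp add: mult_ac)
  qed
  also have "\<dots> = K * moment * (l1norm d h)\<^sup>2"
    unfolding moment_def
    by (simp add: integral_mult_right_zero[symmetric] mult_ac del: integral_mult_right_zero)
  finally show ?thesis .
qed
lemma ef_E_taylor_at:
  assumes Z0: "(\<integral>x. E0 x \<partial>M) > 0"
  shows "\<exists>\<eta>>0. \<exists>C. \<forall>h. l1norm d h < \<eta> \<longrightarrow> (\<forall>k<d.
     \<bar>ef_E M d s (\<theta>0 + h) (\<lambda>x. s x k) - ef_E M d s \<theta>0 (\<lambda>x. s x k)
       - (\<Sum>p<d. h p * ef_cov M d s \<theta>0 s s k p)\<bar> \<le> C * (l1norm d h)\<^sup>2)"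
proof -
  define b0 where "b0 = (\<integral>x. E0 x \<partial>M)"
  define m1 where "m1 k = (\<integral>x. s x k * E0 x \<partial>M)" for k
  define m2 where "m2 k p = (\<integral>x. s x k * s x p * E0 x \<partial>M)" for k p
  define L where "L = (\<Sum>k<d. \<Sum>p<d. \<bar>m2 k p\<bar>) + (\<Sum>p<d. \<bar>m1 p\<bar>)"
  define A where "A = (\<Sum>k<d. \<bar>m1 k\<bar>)"
  define R where "R = K * moment"
  have b0: "b0 > 0" using Z0 unfolding b0_def .
  have L: "L \<ge> 0" unfolding L_def by (intro add_nonneg_nonneg sum_nonneg) auto
  have R: "R \<ge> 0" unfolding R_def using K_pos moment_nonneg by simp
  define \<eta> where "\<eta> = min (\<delta>/2) (min 1 (b0 / (2 * (L + R + 1))))"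
  define C where "C = 2*(b0+A)*L*(L+R)/b0^3 + 2*(b0+A)*R/b0\<^sup>2"
  have "l1norm d h < \<eta> \<longrightarrow> \<bar>ef_E M d s (\<theta>0 + h) (\<lambda>x. s x k) - ef_E M d s \<theta>0 (\<lambda>x. s x k)
       - (\<Sum>p<d. h p * ef_cov M d s \<theta>0 s s k p)\<bar> \<le> C * (l1norm d h)\<^sup>2" if k: "k < d" for h k
  proof
    assume h: "l1norm d h < \<eta>"
    define n where "n = l1norm d h"
    have n: "0 \<le> n" "n \<le> 1" "n \<le> \<delta>/2" using h l1norm_nonneg[of d h] unfolding n_def \<eta>_def by auto
    have "R*n\<^sup>2 \<le> R*n"
      using n R by (intro mult_left_mono) (auto simp: power2_eq_square intro: mult_left_le_one_le)
    then have "L*n + R*n\<^sup>2 \<le> (L + R + 1) * n" using n by (simp add: algebra_simps)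
    also have "\<dots> \<le> (L + R + 1) * (b0 / (2 * (L + R + 1)))"
      using h L R unfolding n_def \<eta>_def by (intro mult_left_mono) auto
    also have "\<dots> = b0/2" using L R by (simp add: field_simps)
    finally have small: "L*n + R*n\<^sup>2 \<le> b0/2" .
    define A1 where "A1 = (\<Sum>p<d. h p * m2 k p)"
    define B1 where "B1 = (\<Sum>p<d. h p * m1 p)"
    define a where "a = (\<integral>x. s x k * exp (ip d (\<theta>0 + h) (s x)) \<partial>M)"
    define b where "b = (\<integral>x. exp (ip d (\<theta>0 + h) (s x)) \<partial>M)"
    have Ra: "\<bar>a - m1 k - A1\<bar> \<le> R*n\<^sup>2"
      using integral_taylor[of "\<lambda>x. s x k" h] measurable_stat abs_stat_le k n(3)
      unfolding a_def A1_def m1_def m2_def R_def n_def by auto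
    have Rb: "\<bar>b - b0 - B1\<bar> \<le> R*n\<^sup>2"
      using integral_taylor[of "\<lambda>x. 1" h] n(3)
      unfolding b_def B1_def b0_def m1_def R_def n_def by (simp add: S_nonneg)
    have "\<bar>A1\<bar> \<le> n * (\<Sum>p<d. \<bar>m2 k p\<bar>)"
      using abs_ip_le[of d h "m2 k"] unfolding A1_def n_def ip_def .
    also have "\<dots> \<le> n * L"
    proof (rule mult_left_mono[OF _ n(1)])
      have "(\<Sum>p<d. \<bar>m2 k p\<bar>) \<le> (\<Sum>k<d. \<Sum>p<d. \<bar>m2 k p\<bar>)"
        using k by (intro member_le_sum[where f="\<lambda>k. \<Sum>p<d. \<bar>m2 k p\<bar>"]) (auto intro: sum_nonneg)
      then show "(\<Sum>p<d. \<bar>m2 k p\<bar>) \<le> L"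
        unfolding L_def using sum_nonneg[of "{..<d}" "\<lambda>p. \<bar>m1 p\<bar>"] by linarith
    qed
    finally have A1: "\<bar>A1\<bar> \<le> L*n" by (simp add: mult.commute)
    have "\<bar>B1\<bar> \<le> n * (\<Sum>p<d. \<bar>m1 p\<bar>)"
      using abs_ip_le[of d h m1] unfolding B1_def n_def ip_def .
    also have "\<dots> \<le> n * L"
      unfolding L_def using n by (intro mult_left_mono) (auto intro: add_increasing sum_nonneg)
    finally have B1: "\<bar>B1\<bar> \<le> L*n" by (simp add: mult.commute)
    have "\<bar>(m1 k + A1 + (a - m1 k - A1))/(b0 + B1 + (b - b0 - B1)) - m1 k/b0 - (A1*b0 - m1 k*B1)/b0\<^sup>2\<bar>
      \<le> (2*(b0+\<bar>m1 k\<bar>)*L*(L+R)/b0^3 + 2*(b0+\<bar>m1 k\<bar>)*R/b0\<^sup>2) * n\<^sup>2"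
      by (rule quotient_linearization_error[OF b0 A1 B1 Ra Rb n(1,2) small L R])
    also have "\<dots> \<le> C * n\<^sup>2"
    proof (intro mult_right_mono)
      have "\<bar>m1 k\<bar> \<le> A" unfolding A_def using k by (intro member_le_sum[where f="\<lambda>k. \<bar>m1 k\<bar>"]) auto
      then show "2*(b0+\<bar>m1 k\<bar>)*L*(L+R)/b0^3 + 2*(b0+\<bar>m1 k\<bar>)*R/b0\<^sup>2 \<le> C"
        unfolding C_def using b0 L R by (intro add_mono divide_right_mono mult_right_mono mult_left_mono) auto
    qed simp
    moreover have "ef_E M d s (\<theta>0 + h) (\<lambda>x. s x k) = a / b"
      unfolding ef_E_eq_quotient a_def b_def ..
    moreover have "ef_E M d s \<theta>0 (\<lambda>x. s x k) = m1 k / b0"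
      unfolding ef_E_eq_quotient m1_def b0_def ..
    moreover have "(\<Sum>p<d. h p * ef_cov M d s \<theta>0 s s k p) = (A1*b0 - m1 k*B1)/b0\<^sup>2"
    proof -
      have cov: "ef_cov M d s \<theta>0 s s k p = m2 k p / b0 - m1 k / b0 * (m1 p / b0)" for p
        unfolding ef_cov_def ef_E_eq_quotient m1_def m2_def b0_def by simp
      have "(\<Sum>p<d. h p * ef_cov M d s \<theta>0 s s k p) = (\<Sum>p<d. h p * m2 k p / b0 - m1 k / b0^2 * (h p * m1 p))"
      proof (rule sum.cong)
        fix p show "h p * ef_cov M d s \<theta>0 s s k p = h p * m2 k p / b0 - m1 k / b0^2 * (h p * m1 p)"
          unfolding cov using b0 by (simp add: field_simps power2_eq_square)
      qed simp
      also have "\<dots> = A1 / b0 - m1 k / b0^2 * B1"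
        unfolding A1_def B1_def by (simp add: sum_subtractf sum_divide_distrib sum_distrib_left)
      also have "\<dots> = (A1*b0 - m1 k*B1)/b0\<^sup>2" using b0 by (simp add: field_simps power2_eq_square)
      finally show ?thesis .
    qed
    ultimately show "\<bar>ef_E M d s (\<theta>0 + h) (\<lambda>x. s x k) - ef_E M d s \<theta>0 (\<lambda>x. s x k)
       - (\<Sum>p<d. h p * ef_cov M d s \<theta>0 s s k p)\<bar> \<le> C * (l1norm d h)\<^sup>2"
      unfolding n_def by simp
  qed
  moreover have "\<eta> > 0" unfolding \<eta>_def using delta_pos b0 L R by auto
  ultimately show ?thesis by blast
qed

end

lemma ef_E_taylor:
  assumes EF: "exp_family M d s" and d: "d > 0" and th: "\<theta>0 \<in> ef_Theta M d s"
  shows "\<exists>\<eta>>0. \<exists>C. \<forall>h\<in>vecs d. l1norm d h < \<eta> \<longrightarrow> \<theta>0 + h \<in> ef_Theta M d s \<and> (\<forall>k<d.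
     \<bar>ef_E M d s (\<theta>0 + h) (\<lambda>x. s x k) - ef_E M d s \<theta>0 (\<lambda>x. s x k)
       - (\<Sum>p<d. h p * ef_cov M d s \<theta>0 s s k p)\<bar> \<le> C * (l1norm d h)\<^sup>2)"
proof -
  obtain \<delta> where "\<delta> > 0" "integrable M (\<lambda>x. exp (ip d \<theta>0 (s x)) * exp (\<delta> * (\<Sum>k<d. \<bar>s x k\<bar>)))"
    using exp_family_exp_moment[OF exp_family_measurable[OF EF] exp_family_open[OF EF] th d] by blast
  then interpret exp_moment M d s \<theta>0 \<delta>
    using exp_family_measurable[OF EF] by unfold_locales auto
  obtain \<eta>1 C where "\<eta>1 > 0" and "\<forall>h. l1norm d h < \<eta>1 \<longrightarrow> (\<forall>k<d.
     \<bar>ef_E M d s (\<theta>0 + h) (\<lambda>x. s x k) - ef_E M d s \<theta>0 (\<lambda>x. s x k)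
       - (\<Sum>p<d. h p * ef_cov M d s \<theta>0 s s k p)\<bar> \<le> C * (l1norm d h)\<^sup>2)"
    using ef_E_taylor_at[OF ef_normalizer_pos[OF EF d th]] by blast
  moreover obtain e where "e > 0" "\<forall>h\<in>vecs d. l1norm d h < e \<longrightarrow> \<theta>0 + h \<in> ef_Theta M d s"
    using open_in_vecs_l1norm_ball[OF exp_family_open[OF EF] th] by blast
  ultimately show ?thesis by (intro exI[of _ "min \<eta>1 e"]) auto
qed

lemma ef_E_lipschitz:
  assumes EF: "exp_family M d s" and d: "d > 0" and th: "\<theta>0 \<in> ef_Theta M d s"
  shows "\<exists>\<eta>>0. \<exists>C. \<forall>h\<in>vecs d. l1norm d h < \<eta> \<longrightarrow> \<theta>0 + h \<in> ef_Theta M d s \<and> (\<forall>k<d.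
     \<bar>ef_E M d s (\<theta>0 + h) (\<lambda>x. s x k) - ef_E M d s \<theta>0 (\<lambda>x. s x k)\<bar> \<le> C * l1norm d h)"
proof -
  obtain \<eta> C where \<eta>: "\<eta> > 0" and C: "\<forall>h\<in>vecs d. l1norm d h < \<eta> \<longrightarrow> \<theta>0 + h \<in> ef_Theta M d s \<and>
     (\<forall>k<d. \<bar>ef_E M d s (\<theta>0 + h) (\<lambda>x. s x k) - ef_E M d s \<theta>0 (\<lambda>x. s x k)
       - (\<Sum>p<d. h p * ef_cov M d s \<theta>0 s s k p)\<bar> \<le> C * (l1norm d h)\<^sup>2)"
    using ef_E_taylor[OF assms] by blast
  define L where "L = (\<Sum>k<d. \<Sum>p<d. \<bar>ef_cov M d s \<theta>0 s s k p\<bar>)"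
  have "\<bar>ef_E M d s (\<theta>0 + h) (\<lambda>x. s x k) - ef_E M d s \<theta>0 (\<lambda>x. s x k)\<bar> \<le> (L + \<bar>C\<bar>) * l1norm d h"
    if h: "h \<in> vecs d" "l1norm d h < min \<eta> 1" and k: "k < d" for h k
  proof -
    have "\<bar>\<Sum>p<d. h p * ef_cov M d s \<theta>0 s s k p\<bar> \<le> l1norm d h * (\<Sum>p<d. \<bar>ef_cov M d s \<theta>0 s s k p\<bar>)"
      using abs_ip_le[of d h "ef_cov M d s \<theta>0 s s k"] unfolding ip_def .
    also have "\<dots> \<le> l1norm d h * L" unfolding L_def using k l1norm_nonneg[of d h]
      by (intro mult_left_mono member_le_sum[where f="\<lambda>k. \<Sum>p<d. \<bar>ef_cov M d s \<theta>0 s s k p\<bar>"])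
        (auto intro: sum_nonneg)
    finally have lin: "\<bar>\<Sum>p<d. h p * ef_cov M d s \<theta>0 s s k p\<bar> \<le> l1norm d h * L" .
    have "(l1norm d h)\<^sup>2 \<le> l1norm d h"
      using h l1norm_nonneg[of d h] by (auto simp: power2_eq_square intro: mult_left_le_one_le)
    then have "\<bar>C\<bar> * (l1norm d h)\<^sup>2 \<le> \<bar>C\<bar> * l1norm d h" by (intro mult_left_mono) auto
    moreover have "C * (l1norm d h)\<^sup>2 \<le> \<bar>C\<bar> * (l1norm d h)\<^sup>2" by (intro mult_right_mono) auto
    moreover have "\<bar>ef_E M d s (\<theta>0 + h) (\<lambda>x. s x k) - ef_E M d s \<theta>0 (\<lambda>x. s x k)
       - (\<Sum>p<d. h p * ef_cov M d s \<theta>0 s s k p)\<bar> \<le> C * (l1norm d h)\<^sup>2"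
      using C h k by auto
    ultimately show ?thesis using lin by (simp add: algebra_simps abs_le_iff)
  qed
  then show ?thesis using C \<eta> by (intro exI[of _ "min \<eta> 1"] exI[of _ "L + \<bar>C\<bar>"]) auto
qed

lemma continuous_on_ef_mean:
  assumes EF: "exp_family N d s" and d: "d > 0" and U: "U \<subseteq> ef_Theta N d s"
  shows "continuous_on U (ef_mean N d s)"
proof (rule continuous_on_coordinatewise_then_product)
  fix i
  show "continuous_on U (\<lambda>\<theta>. ef_mean N d s \<theta> i)"
  proof (cases "i < d")
    case False
    then show ?thesis unfolding ef_mean_def by simp
  next
    case i: True
    show ?thesis unfolding continuous_on_topological
    proof (intro ballI allI impI)
      fix x B assume x: "x \<in> U" and B: "open B" "ef_mean N d s x i \<in> B"
      obtain \<epsilon> where \<epsilon>: "\<epsilon> > 0" "\<forall>y. dist y (ef_mean N d s x i) < \<epsilon> \<longrightarrow> y \<in> B"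
        using B unfolding open_dist by blast
      obtain \<eta> C where \<eta>: "\<eta> > 0" and C: "\<forall>h\<in>vecs d. l1norm d h < \<eta> \<longrightarrow> x + h \<in> ef_Theta N d s \<and>
         (\<forall>k<d. \<bar>ef_E N d s (x + h) (\<lambda>z. s z k) - ef_E N d s x (\<lambda>z. s z k)\<bar> \<le> C * l1norm d h)"
        using ef_E_lipschitz[OF EF d] x U by blast
      define \<rho> where "\<rho> = min \<eta> (\<epsilon> / (\<bar>C\<bar> + 1)) / (real d + 1)"
      have \<rho>: "\<rho> > 0" unfolding \<rho>_def using \<eta> \<epsilon> by auto
      show "\<exists>A. open A \<and> x \<in> A \<and> (\<forall>y\<in>U. y \<in> A \<longrightarrow> ef_mean N d s y i \<in> B)"
      proof (intro exI[of _ "{y. \<forall>k<d. \<bar>y k - x k\<bar> < \<rho>}"] conjI open_coordwise_ball ballI impI)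
        show "x \<in> {y. \<forall>k<d. \<bar>y k - x k\<bar> < \<rho>}" using \<rho> by simp
        fix y assume y: "y \<in> U" "y \<in> {y. \<forall>k<d. \<bar>y k - x k\<bar> < \<rho>}"
        have hv: "y - x \<in> vecs d" using x y U ef_Theta_subset_vecs[of N d s] by (intro vecs_diff) auto
        have "l1norm d (y - x) \<le> real d * \<rho>" using y(2) by (intro l1norm_le_of_coordwise) auto
        also have "\<dots> = min \<eta> (\<epsilon> / (\<bar>C\<bar> + 1)) * (real d / (real d + 1))" unfolding \<rho>_def by simp
        also have "\<dots> < min \<eta> (\<epsilon> / (\<bar>C\<bar> + 1)) * 1"
          using \<eta> \<epsilon> by (intro mult_strict_left_mono) auto
        finally have hn: "l1norm d (y - x) < \<eta>" "l1norm d (y - x) < \<epsilon> / (\<bar>C\<bar> + 1)" by auto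
        have "\<bar>ef_E N d s y (\<lambda>z. s z i) - ef_E N d s x (\<lambda>z. s z i)\<bar> \<le> C * l1norm d (y - x)"
          using C hv hn(1) i by fastforce
        also have "\<dots> \<le> (\<bar>C\<bar> + 1) * l1norm d (y - x)"
          using l1norm_nonneg[of d "y - x"] by (intro mult_right_mono) auto
        also have "\<dots> < (\<bar>C\<bar> + 1) * (\<epsilon> / (\<bar>C\<bar> + 1))" using hn(2) by (intro mult_strict_left_mono) auto
        also have "\<dots> = \<epsilon>" by (simp add: field_simps add_pos_nonneg)
        finally have "dist (ef_mean N d s y i) (ef_mean N d s x i) < \<epsilon>"
          unfolding ef_mean_def using i by (simp add: dist_real_def)
        then show "ef_mean N d s y i \<in> B" using \<epsilon> by blast
      qed
    qed
  qed
qed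

section \<open>The inverse of the mean map\<close>

lemma openin_l1norm_ball_inter:
  assumes T: "open_in_vecs d T"
  shows "openin (Euclidean_space d) (T \<inter> {\<theta>. l1norm d (\<theta> - \<theta>0) < e})"
proof (rule openin_Euclidean_spaceI)
  have Tv: "T \<subseteq> vecs d" using T unfolding open_in_vecs_def by blast
  then show "T \<inter> {\<theta>. l1norm d (\<theta> - \<theta>0) < e} \<subseteq> vecs d" by blast
  show "\<forall>x\<in>T \<inter> {\<theta>. l1norm d (\<theta> - \<theta>0) < e}. \<exists>\<rho>>0. \<forall>y\<in>vecs d.
      (\<forall>k<d. \<bar>y k - x k\<bar> < \<rho>) \<longrightarrow> y \<in> T \<inter> {\<theta>. l1norm d (\<theta> - \<theta>0) < e}"
  proof
    fix x assume x: "x \<in> T \<inter> {\<theta>. l1norm d (\<theta> - \<theta>0) < e}"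
    obtain \<epsilon> where \<epsilon>: "\<epsilon> > 0" "\<forall>h\<in>vecs d. l1norm d h < \<epsilon> \<longrightarrow> x + h \<in> T"
      using open_in_vecs_l1norm_ball[OF T] x by blast
    have xv: "x \<in> vecs d" using Tv x by blast
    define r where "r = e - l1norm d (x - \<theta>0)"
    have r: "r > 0" using x unfolding r_def by auto
    define \<rho> where "\<rho> = min \<epsilon> r / (real d + 1)"
    show "\<exists>\<rho>>0. \<forall>y\<in>vecs d. (\<forall>k<d. \<bar>y k - x k\<bar> < \<rho>) \<longrightarrow> y \<in> T \<inter> {\<theta>. l1norm d (\<theta> - \<theta>0) < e}"
    proof (intro exI[of _ \<rho>] conjI ballI impI)
      show "\<rho> > 0" unfolding \<rho>_def using \<epsilon> r by auto
      fix y assume y: "y \<in> vecs d" "\<forall>k<d. \<bar>y k - x k\<bar> < \<rho>"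
      have "l1norm d (y - x) \<le> real d * \<rho>" by (rule l1norm_le_of_coordwise[OF y(2)])
      also have "\<dots> = min \<epsilon> r * (real d / (real d + 1))" unfolding \<rho>_def by simp
      also have "\<dots> < min \<epsilon> r * 1" using \<epsilon> r by (intro mult_strict_left_mono) auto
      finally have yn: "l1norm d (y - x) < \<epsilon>" "l1norm d (y - x) < r" by auto
      have "x + (y - x) \<in> T" using \<epsilon>(2) yn(1) vecs_diff[OF y(1) xv] by blast
      moreover have "l1norm d (y - \<theta>0) < e"
        using l1norm_triangle[of d y \<theta>0 x] yn(2) unfolding r_def by linarith
      ultimately show "y \<in> T \<inter> {\<theta>. l1norm d (\<theta> - \<theta>0) < e}" by simp
    qed
  qed
qed

text \<open>The mean map is continuous and injective on the open set \<open>\<Theta>\<close>, so by invariance of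
  domain it is open there, i.e.\ its inverse is continuous.\<close>
lemma ef_mean_inverse_tendsto:
  fixes \<theta>t m :: "'b \<Rightarrow> nat \<Rightarrow> real"
  assumes EF: "exp_family N d s" and d: "d > 0" and inj: "inj_on (ef_mean N d s) (ef_Theta N d s)"
    and th: "\<theta>0 \<in> ef_Theta N d s" and e: "e > 0"
    and ev: "eventually (\<lambda>t. \<theta>t t \<in> ef_Theta N d s \<and> ef_mean N d s (\<theta>t t) = m t) F"
    and m0: "ef_mean N d s \<theta>0 = m0"
    and mlim: "\<forall>i<d. filterlim (\<lambda>t. m t i) (nhds (m0 i)) F"
  shows "eventually (\<lambda>t. l1norm d (\<theta>t t - \<theta>0) < e) F"
proof -
  let ?f = "ef_mean N d s"
  define U where "U = ef_Theta N d s \<inter> {\<theta>. l1norm d (\<theta> - \<theta>0) < e}"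
  have UT: "U \<subseteq> ef_Theta N d s" unfolding U_def by auto
  have Uv: "U \<subseteq> vecs d" using UT ef_Theta_subset_vecs[of N d s] by (rule order.trans)
  have th0U: "\<theta>0 \<in> U" unfolding U_def using th e by (simp add: l1norm_def)
  have opU: "openin (Euclidean_space d) U"
    unfolding U_def by (rule openin_l1norm_ball_inter[OF exp_family_open[OF EF]])
  have "continuous_map (subtopology (Euclidean_space d) U) (Euclidean_space d) ?f"
    unfolding cm_Euclidean_space_iff_continuous_on
  proof
    show "continuous_on (topspace (subtopology (Euclidean_space d) U)) ?f"
      using UT by (intro continuous_on_ef_mean[OF EF d]) (auto simp: topspace_subtopology)
    show "?f \<in> topspace (subtopology (Euclidean_space d) U) \<rightarrow> topspace (Euclidean_space d)"
      unfolding topspace_Euclidean_space by (auto simp: ef_mean_def)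
  qed
  then have "openin (Euclidean_space d) (?f ` U)"
    by (rule invariance_of_domain_Euclidean_space[OF opU _ inj_on_subset[OF inj UT]])
  then obtain T where T: "open T" "?f ` U = vecs d \<inter> T"
    unfolding Euclidean_space_eq_vecs openin_open by blast
  have "m0 \<in> T" using T(2) m0 th0U by blast
  then obtain r I where rI: "r > 0" "finite I" "\<forall>y. (\<forall>i\<in>I. \<bar>y i - m0 i\<bar> < r) \<longrightarrow> y \<in> T"
    using open_fun_contains_box[OF T(1)] by blast
  have m0v: "m0 \<in> vecs d" using m0 ef_mean_in_vecs[of N d s \<theta>0] by simp
  have "eventually (\<lambda>t. \<bar>m t i - m0 i\<bar> < r) F" for i
  proof (cases "i < d")
    case True
    from tendstoD[OF mlim[rule_format, OF True] rI(1)] show ?thesis by (simp add: dist_real_def)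
  next
    case False
    show ?thesis using ev
    proof (rule eventually_mono)
      fix t assume "\<theta>t t \<in> ef_Theta N d s \<and> ef_mean N d s (\<theta>t t) = m t"
      then have "m t \<in> vecs d" using ef_mean_in_vecs[of N d s "\<theta>t t"] by simp
      then show "\<bar>m t i - m0 i\<bar> < r" using m0v False rI(1) unfolding vecs_def by auto
    qed
  qed
  then have "eventually (\<lambda>t. \<forall>i\<in>I. \<bar>m t i - m0 i\<bar> < r) F"
    by (intro eventually_ball_finite[OF rI(2)]) auto
  with ev show ?thesis
  proof eventually_elim
    case (elim t)
    then have "m t \<in> T" "m t \<in> vecs d"
      using rI(3) ef_mean_in_vecs[of N d s "\<theta>t t"] by simp_all
    then have "m t \<in> ?f ` U" unfolding T(2) by (rule IntI[rotated])
    then obtain \<theta>' where \<theta>': "\<theta>' \<in> U" "?f \<theta>' = m t" by (rule imageE) (rule that, simp_all)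
    have "?f (\<theta>t t) = ?f \<theta>'" using elim(1) \<theta>'(2) by simp
    then have "\<theta>t t = \<theta>'"
      using inj_onD[OF inj] elim(1) \<theta>'(1) UT by blast
    then show "l1norm d (\<theta>t t - \<theta>0) < e" using \<theta>'(1) unfolding U_def by simp
  qed
qed

text \<open>The a priori bound \<open>real d * A * C * \<bar>D\<bar>\<^sub>1 \<le> 1/2\<close> lets the quadratic error be absorbed,
  giving first \<open>\<bar>D\<bar>\<^sub>1 \<le> B \<bar>t\<bar>\<close> and then the quadratic bound.\<close>
lemma perturbed_linear_system_estimate:
  fixes D c :: "nat \<Rightarrow> real"
  assumes HI: "mat_is_inv d H Hinv" and k: "k < d"
    and A: "\<forall>k'<d. (\<Sum>j<d. \<bar>Hinv k' j\<bar>) \<le> A"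
    and err: "\<forall>j<d. \<bar>(\<Sum>p<d. D p * H j p) - t * c j\<bar> \<le> C * (l1norm d D)\<^sup>2 + C' * t\<^sup>2"
    and small: "real d * A * C * l1norm d D \<le> 1/2" and t: "\<bar>t\<bar> \<le> 1" and C: "C \<ge> 0" "C' \<ge> 0"
  defines "v \<equiv> \<lambda>k. \<Sum>j<d. Hinv k j * c j"
  defines "B \<equiv> 2 * l1norm d v + 2 * real d * A * C'"
  shows "\<bar>D k - t * v k\<bar> \<le> A * (C * B\<^sup>2 + C') * t\<^sup>2"
proof -
  define n where "n = l1norm d D"
  have "0 \<le> (\<Sum>j<d. \<bar>Hinv k j\<bar>)" by (intro sum_nonneg) auto
  also have "\<dots> \<le> A" using A k by blast
  finally have A0: "0 \<le> A" .
  have Dk: "\<bar>D k' - t * v k'\<bar> \<le> A * (C * n\<^sup>2 + C' * t\<^sup>2)" if k': "k' < d" for k'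
  proof -
    have tv: "(\<Sum>j<d. Hinv k' j * (t * c j)) = t * v k'"
      unfolding v_def by (simp add: sum_distrib_left mult_ac)
    have "\<bar>D k' - (\<Sum>j<d. Hinv k' j * (t * c j))\<bar> \<le> (\<Sum>j<d. \<bar>Hinv k' j\<bar>) * (C * n\<^sup>2 + C' * t\<^sup>2)"
      using mat_is_inv_solution_error[OF HI k' err] unfolding n_def .
    also have "\<dots> \<le> A * (C * n\<^sup>2 + C' * t\<^sup>2)" using A k' C by (intro mult_right_mono) auto
    finally show ?thesis unfolding tv .
  qed
  have "n = (\<Sum>k'<d. \<bar>D k'\<bar>)" unfolding n_def l1norm_def ..
  also have "\<dots> \<le> (\<Sum>k'<d. \<bar>t\<bar> * \<bar>v k'\<bar> + A * (C * n\<^sup>2 + C' * t\<^sup>2))"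
  proof (rule sum_mono)
    fix k' assume "k' \<in> {..<d}"
    then have "\<bar>D k' - t * v k'\<bar> \<le> A * (C * n\<^sup>2 + C' * t\<^sup>2)" using Dk by auto
    then show "\<bar>D k'\<bar> \<le> \<bar>t\<bar> * \<bar>v k'\<bar> + A * (C * n\<^sup>2 + C' * t\<^sup>2)"
      using abs_triangle_ineq[of "D k' - t * v k'" "t * v k'"] by (simp add: abs_mult)
  qed
  also have "\<dots> = \<bar>t\<bar> * l1norm d v + (real d * A * C) * n\<^sup>2 + (real d * A * C') * t\<^sup>2"
    unfolding l1norm_def by (simp add: sum.distrib sum_distrib_left algebra_simps)
  finally have "n \<le> (2 * l1norm d v + 2 * (real d * A * C')) * \<bar>t\<bar>"
    by (rule le_linear_of_le_quadratic) (use small t A0 C l1norm_nonneg[of d D] in \<open>auto simp: n_def\<close>)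
  then have "n\<^sup>2 \<le> (B * \<bar>t\<bar>)\<^sup>2"
    unfolding B_def using l1norm_nonneg[of d D] by (intro power_mono) (auto simp: algebra_simps n_def)
  then have "C * n\<^sup>2 \<le> C * (B\<^sup>2 * t\<^sup>2)" using C by (intro mult_left_mono) (auto simp: power_mult_distrib)
  then have "A * (C * n\<^sup>2 + C' * t\<^sup>2) \<le> A * (C * (B\<^sup>2 * t\<^sup>2) + C' * t\<^sup>2)"
    using A0 by (rule mult_left_mono[OF add_right_mono])
  also have "\<dots> = A * (C * B\<^sup>2 + C') * t\<^sup>2" by (simp add: algebra_simps)
  finally show ?thesis using Dk[OF k] by linarith
qed

text \<open>The a priori smallness of \<open>\<theta>(t) - \<theta>\<^sub>0\<close> needed to absorb the quadratic error comes from
  the continuity of the inverse mean map.\<close>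
lemma ef_mean_inverse_has_derivative:
  fixes \<theta>t m :: "real \<Rightarrow> nat \<Rightarrow> real" and c :: "nat \<Rightarrow> real"
  assumes EF: "exp_family N d s" and d: "d > 0" and inj: "inj_on (ef_mean N d s) (ef_Theta N d s)"
    and th: "\<theta>0 \<in> ef_Theta N d s"
    and ev: "eventually (\<lambda>t. \<theta>t t \<in> ef_Theta N d s \<and> ef_mean N d s (\<theta>t t) = m t) (at 0)"
    and at0: "\<theta>t 0 = \<theta>0" and m0: "ef_mean N d s \<theta>0 = m 0"
    and mest: "eventually (\<lambda>t. \<forall>k<d. \<bar>m t k - m 0 k - t * c k\<bar> \<le> C' * t\<^sup>2) (at 0)"
    and HI: "mat_is_inv d (ef_cov N d s \<theta>0 s s) Hinv"
    and k: "k < d"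
  shows "((\<lambda>t. \<theta>t t k) has_real_derivative (\<Sum>j<d. Hinv k j * c j)) (at 0)"
proof -
  define H where "H = ef_cov N d s \<theta>0 s s"
  obtain \<eta> C where \<eta>: "\<eta> > 0" and C: "\<forall>h\<in>vecs d. l1norm d h < \<eta> \<longrightarrow> \<theta>0 + h \<in> ef_Theta N d s \<and>
     (\<forall>k<d. \<bar>ef_E N d s (\<theta>0 + h) (\<lambda>x. s x k) - ef_E N d s \<theta>0 (\<lambda>x. s x k)
       - (\<Sum>p<d. h p * H k p)\<bar> \<le> C * (l1norm d h)\<^sup>2)"
    using ef_E_taylor[OF EF d th] unfolding H_def by blast
  define A where "A = (\<Sum>k<d. \<Sum>j<d. \<bar>Hinv k j\<bar>)"
  define v where "v = (\<lambda>k. \<Sum>j<d. Hinv k j * c j)"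
  define B where "B = 2 * l1norm d v + 2 * real d * A * \<bar>C'\<bar>"
  have A: "A \<ge> 0" unfolding A_def by (intro sum_nonneg) auto
  have Ak: "\<forall>k'<d. (\<Sum>j<d. \<bar>Hinv k' j\<bar>) \<le> A"
    unfolding A_def
    by (intro allI impI member_le_sum[where f="\<lambda>k. \<Sum>j<d. \<bar>Hinv k j\<bar>"]) (auto intro: sum_nonneg)
  define e0 where "e0 = min \<eta> (1 / (2 * real d * A * \<bar>C\<bar> + 1))"
  have e0: "e0 > 0" unfolding e0_def using \<eta> A by (auto intro!: add_nonneg_pos)
  have "filterlim (\<lambda>t. m t i) (nhds (m 0 i)) (at 0)" if "i < d" for i
  proof -
    have "((\<lambda>t. m t i) has_real_derivative c i) (at 0)"
      using mest that by (intro has_real_derivative_of_quadratic_error[where K = C']) (auto elim: eventually_mono)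
    then show ?thesis by (metis DERIV_isCont isCont_def tendsto_at_iff_tendsto_nhds)
  qed
  then have small: "eventually (\<lambda>t. l1norm d (\<theta>t t - \<theta>0) < e0) (at 0)"
    using ef_mean_inverse_tendsto[OF EF d inj th e0 ev m0] by blast
  have "eventually (\<lambda>t. \<bar>\<theta>t t k - \<theta>t 0 k - t * v k\<bar> \<le> A * (\<bar>C\<bar> * B\<^sup>2 + \<bar>C'\<bar>) * t\<^sup>2) (at 0)"
    using ev mest small eventually_abs_less_at_0[OF zero_less_one]
  proof eventually_elim
    case (elim t)
    define D where "D = \<theta>t t - \<theta>0"
    have n: "l1norm d D < \<eta>" "l1norm d D < 1 / (2 * real d * A * \<bar>C\<bar> + 1)"
      using elim(3) unfolding D_def e0_def by auto
    have Dv: "D \<in> vecs d"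
      unfolding D_def using elim(1) th ef_Theta_subset_vecs[of N d s] by (intro vecs_diff) auto
    have w: "\<forall>j<d. \<bar>(\<Sum>p<d. D p * H j p) - t * c j\<bar> \<le> \<bar>C\<bar> * (l1norm d D)\<^sup>2 + \<bar>C'\<bar> * t\<^sup>2"
    proof (intro allI impI)
      fix j assume j: "j < d"
      have "\<bar>ef_E N d s (\<theta>0 + D) (\<lambda>x. s x j) - ef_E N d s \<theta>0 (\<lambda>x. s x j) - (\<Sum>p<d. D p * H j p)\<bar>
          \<le> C * (l1norm d D)\<^sup>2"
        using C Dv n(1) j by blast
      moreover have "ef_mean N d s (\<theta>t t) j = m t j" using elim(1) by simp
      then have "ef_E N d s (\<theta>0 + D) (\<lambda>x. s x j) = m t j" using j unfolding D_def ef_mean_def by simp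
      moreover have "ef_mean N d s \<theta>0 j = m 0 j" using m0 by simp
      then have "ef_E N d s \<theta>0 (\<lambda>x. s x j) = m 0 j" using j unfolding ef_mean_def by simp
      moreover have "\<bar>m t j - m 0 j - t * c j\<bar> \<le> C' * t\<^sup>2" using elim(2) j by blast
      moreover have "C' * t\<^sup>2 \<le> \<bar>C'\<bar> * t\<^sup>2" by (intro mult_right_mono) auto
      moreover have "C * (l1norm d D)\<^sup>2 \<le> \<bar>C\<bar> * (l1norm d D)\<^sup>2" by (intro mult_right_mono) auto
      ultimately show "\<bar>(\<Sum>p<d. D p * H j p) - t * c j\<bar> \<le> \<bar>C\<bar> * (l1norm d D)\<^sup>2 + \<bar>C'\<bar> * t\<^sup>2"
        by (simp add: abs_le_iff)
    qed
    have "real d * A * \<bar>C\<bar> * l1norm d D \<le> real d * A * \<bar>C\<bar> * (1 / (2 * real d * A * \<bar>C\<bar> + 1))"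
      using n A by (intro mult_left_mono) auto
    also have "\<dots> \<le> 1/2"
    proof -
      have "real d * A * \<bar>C\<bar> \<ge> 0" using A by simp
      then show ?thesis by (simp add: field_simps)
    qed
    finally have small: "real d * A * \<bar>C\<bar> * l1norm d D \<le> 1/2" .
    have "\<bar>D k - t * v k\<bar> \<le> A * (\<bar>C\<bar> * B\<^sup>2 + \<bar>C'\<bar>) * t\<^sup>2"
      unfolding v_def B_def
      by (rule perturbed_linear_system_estimate[OF HI[folded H_def] k Ak w small]) (use elim(4) in auto)
    moreover have "\<bar>\<theta>t t k - \<theta>t 0 k - t * v k\<bar> = \<bar>D k - t * v k\<bar>" unfolding D_def using at0 by simp
    ultimately show ?case by simp
  qed
  then show ?thesis unfolding v_def by (rule has_real_derivative_of_quadratic_error)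
qed
section \<open>Block structure of factor statistics and parameters\<close>

definition block_offset :: "nat list \<Rightarrow> nat \<Rightarrow> nat" where
  "block_offset ds n = sum_list (take n ds)"

lemma block_offset_less:
  "n < length ds \<Longrightarrow> k < ds ! n \<Longrightarrow> block_offset ds n + k < sum_list ds"
proof (induction ds arbitrary: n)
  case (Cons d ds)
  then show ?case by (cases n) (auto simp: block_offset_def)
qed simp

lemma catl_block:
  "n < length xs \<Longrightarrow> k < fst (xs ! n) \<Longrightarrow> catl xs (block_offset (map fst xs) n + k) = snd (xs ! n) k"
proof (induction xs arbitrary: n)
  case (Cons a xs)
  obtain d u where a: "a = (d, u)" by (cases a)
  show ?case
  proof (cases n)
    case 0
    then show ?thesis using Cons.prems a by (simp add: block_offset_def cat2_def)
  next
    case (Suc n')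
    then show ?thesis using Cons.IH[of n'] Cons.prems a by (simp add: block_offset_def cat2_def add.assoc)
  qed
qed simp

lemma catl_update_coord_vec:
  "n < length xs \<Longrightarrow> xs ! n = (d, u) \<Longrightarrow> l < d \<Longrightarrow>
   catl (xs[n := (d, u + coord_vec l t)]) = catl xs + coord_vec (block_offset (map fst xs) n + l) t"
proof (induction xs arbitrary: n)
  case (Cons a xs)
  obtain d1 u1 where a: "a = (d1, u1)" by (cases a)
  show ?case
  proof (cases n)
    case 0
    then show ?thesis using Cons.prems a by (auto simp: block_offset_def cat2_def coord_vec_def fun_eq_iff)
  next
    case (Suc n')
    with Cons.prems have "n' < length xs" "xs ! n' = (d, u)" by auto
    note IH = Cons.IH[OF this Cons.prems(3)]
    show ?thesis unfolding Suc a list_update_code(3) catl.simps IH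
      by (auto simp: block_offset_def cat2_def coord_vec_def fun_eq_iff)
  qed
qed simp

lemma map_eq_list_update:
  assumes "distinct L" "n < length L" "L ! n = j" "\<forall>y\<in>set L. y \<noteq> j \<longrightarrow> f' y = f y"
  shows "map f' L = (map f L)[n := f' j]"
  using assms by (intro nth_equalityI) (auto simp: nth_list_update nth_eq_iff_index_eq)

lemma sum_perturb:
  assumes "finite A"
  shows "(\<Sum>\<gamma>\<in>A. perturb \<mu> \<beta> j l t \<gamma> i k)
    = (\<Sum>\<gamma>\<in>A. \<mu> \<gamma> i k) + (if \<beta> \<in> A \<and> i = j \<and> k = l then t else 0)"
proof -
  have "(\<Sum>\<gamma>\<in>A. perturb \<mu> \<beta> j l t \<gamma> i k)
      = (\<Sum>\<gamma>\<in>A. \<mu> \<gamma> i k + (if \<gamma> = \<beta> then (if i = j \<and> k = l then t else 0) else 0))"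
    unfolding perturb_def by (intro sum.cong) auto
  then show ?thesis using assms by (simp add: sum.distrib)
qed

lemma perturb_other_vertex: "i \<noteq> j \<Longrightarrow> perturb \<mu> \<beta> j l t \<gamma> i = \<mu> \<gamma> i"
  unfolding perturb_def by simp

lemma fac_block:
  fixes \<alpha> :: "'v::linorder set"
  assumes fin: "finite \<alpha>" and i: "i \<in> \<alpha>"
  obtains p where "\<And>k. k < r i \<Longrightarrow> p + k < fac_dim r rb \<alpha>"
    and "\<And>x k. k < r i \<Longrightarrow> fac_stat r \<phi> rb \<phi>b \<alpha> x (p + k) = \<phi> i (x i) k"
    and "\<And>\<mu> \<beta> l t. \<beta> \<in> nbhd F i - {\<alpha>} \<Longrightarrow> finite (nbhd F i) \<Longrightarrow> l < r i \<Longrightarrow>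
           fac_param F r rb thb' thb (perturb \<mu> \<beta> i l t) \<alpha>
           = fac_param F r rb thb' thb \<mu> \<alpha> + coord_vec (p + l) t"
proof -
  let ?L = "sorted_list_of_set \<alpha>"
  let ?ds = "rb \<alpha> # map r ?L"
  obtain n where n: "n < length ?L" "?L ! n = i"
    using i fin by (metis in_set_conv_nth set_sorted_list_of_set)
  define p where "p = block_offset ?ds (Suc n)"
  show ?thesis
  proof (rule that[of p])
    fix k assume k: "k < r i"
    have "p + k < sum_list ?ds" unfolding p_def by (rule block_offset_less) (use n k in simp_all)
    then show "p + k < fac_dim r rb \<alpha>"
      unfolding fac_dim_def using fin by (simp add: sum_list_distinct_conv_sum_set)
  next
    fix x k assume k: "k < r i"
    have "map fst ((rb \<alpha>, \<phi>b \<alpha> x) # map (\<lambda>i. (r i, \<phi> i (x i))) ?L) = ?ds" by simp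
    then show "fac_stat r \<phi> rb \<phi>b \<alpha> x (p + k) = \<phi> i (x i) k"
      using catl_block[of "Suc n" "(rb \<alpha>, \<phi>b \<alpha> x) # map (\<lambda>i. (r i, \<phi> i (x i))) ?L" k] n k
      unfolding fac_stat_def p_def by (simp add: comp_def)
  next
    fix \<mu> \<beta> l t assume \<beta>: "\<beta> \<in> nbhd F i - {\<alpha>}" and finN: "finite (nbhd F i)" and l: "l < r i"
    define f where "f \<mu>' j = (r j, \<lambda>k. thb \<alpha> j k + (\<Sum>\<beta>'\<in>nbhd F j - {\<alpha>}. \<mu>' \<beta>' j k))" for \<mu>' j
    define xs where "xs = (rb \<alpha>, thb' \<alpha>) # map (f \<mu>) ?L"
    have fi: "f (perturb \<mu> \<beta> i l t) i = (r i, snd (f \<mu> i) + coord_vec l t)"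
      unfolding f_def using \<beta> sum_perturb[OF finite_Diff[OF finN]]
      by (auto simp: coord_vec_def fun_eq_iff)
    have "map (f (perturb \<mu> \<beta> i l t)) ?L = (map (f \<mu>) ?L)[n := f (perturb \<mu> \<beta> i l t) i]"
      by (rule map_eq_list_update) (use n in \<open>auto simp: f_def perturb_other_vertex\<close>)
    then have "(rb \<alpha>, thb' \<alpha>) # map (f (perturb \<mu> \<beta> i l t)) ?L
        = xs[Suc n := (r i, snd (f \<mu> i) + coord_vec l t)]"
      unfolding xs_def fi by simp
    moreover have "catl (xs[Suc n := (r i, snd (f \<mu> i) + coord_vec l t)]) = catl xs + coord_vec (p + l) t"
      using catl_update_coord_vec[of "Suc n" xs "r i" "snd (f \<mu> i)" l t] n l
      unfolding xs_def p_def by (simp add: f_def comp_def)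
    ultimately show "fac_param F r rb thb' thb (perturb \<mu> \<beta> i l t) \<alpha>
        = fac_param F r rb thb' thb \<mu> \<alpha> + coord_vec (p + l) t"
      unfolding fac_param_def f_def[symmetric] xs_def by simp
  qed
qed

lemma fac_param_perturb_outside:
  fixes \<alpha> :: "'v::linorder set"
  assumes fin: "finite \<alpha>" and finF: "finite F" and outside: "j \<notin> \<alpha> \<or> \<beta> = \<alpha>"
  shows "fac_param F r rb thb' thb (perturb \<mu> \<beta> j l t) \<alpha> = fac_param F r rb thb' thb \<mu> \<alpha>"
  unfolding fac_param_def
proof (intro arg_cong[where f=catl] arg_cong2[where f=Cons] refl map_cong)
  fix j' assume "j' \<in> set (sorted_list_of_set \<alpha>)"
  then have "\<not> (\<beta> \<in> nbhd F j' - {\<alpha>} \<and> j' = j \<and> k = l)" for k using outside fin by auto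
  moreover have "finite (nbhd F j' - {\<alpha>})" using finF unfolding nbhd_def by auto
  ultimately show "(r j', \<lambda>k. thb \<alpha> j' k + (\<Sum>\<beta>'\<in>nbhd F j' - {\<alpha>}. perturb \<mu> \<beta> j l t \<beta>' j' k))
       = (r j', \<lambda>k. thb \<alpha> j' k + (\<Sum>\<beta>'\<in>nbhd F j' - {\<alpha>}. \<mu> \<beta>' j' k))"
    by (auto simp: sum_perturb fun_eq_iff)
qed

section \<open>Marginals of factor beliefs\<close>

lemma ef_E_eq_integral_distr:
  assumes meas: "\<forall>k<d. (\<lambda>x. s x k) \<in> borel_measurable M" and g: "g \<in> borel_measurable M"
  shows "ef_E M d s \<theta> g = (\<integral>x. g x \<partial>ef_distr M d s \<theta>)"
proof -
  have "ef_dens M d s \<theta> \<in> borel_measurable M"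
    unfolding ef_dens_def using borel_measurable_ip[OF meas] by measurable
  moreover have "ef_dens M d s \<theta> x \<ge> 0" for x
    unfolding ef_dens_def by (intro divide_nonneg_nonneg integral_nonneg_AE) auto
  ultimately have "(\<integral>x. g x \<partial>density M (\<lambda>x. ennreal (ef_dens M d s \<theta> x)))
      = (\<integral>x. ef_dens M d s \<theta> x *\<^sub>R g x \<partial>M)"
    using g by (intro integral_density) auto
  then show ?thesis unfolding ef_E_def ef_distr_def by (simp add: mult.commute)
qed

locale inference_family_ctx =
  fixes V :: "'v::linorder set" and F :: "'v set set" and \<nu> :: "'v \<Rightarrow> 'x measure"
    and r :: "'v \<Rightarrow> nat" and \<phi> :: "'v \<Rightarrow> 'x \<Rightarrow> nat \<Rightarrow> real"
    and rb :: "'v set \<Rightarrow> nat" and \<phi>b :: "'v set \<Rightarrow> ('v \<Rightarrow> 'x) \<Rightarrow> nat \<Rightarrow> real"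
  assumes inference_family: "inference_family V F \<nu> r \<phi> rb \<phi>b"
begin

abbreviation "fmeas \<alpha> \<equiv> fac_meas \<nu> \<alpha>"
abbreviation "fdim \<alpha> \<equiv> fac_dim r rb \<alpha>"
abbreviation "fstat \<alpha> \<equiv> fac_stat r \<phi> rb \<phi>b \<alpha>"

text \<open>\<open>\<Lambda>\<^sub>i\<^sup>-\<^sup>1 (\<Lambda>\<^sub>\<alpha>(\<Theta>)\<^sub>i)\<close>, the natural parameter of the \<open>x\<^sub>i\<close>-marginal of the factor
  distribution with parameter \<open>\<Theta>\<close>.\<close>
definition marginal_param :: "'v set \<Rightarrow> 'v \<Rightarrow> (nat \<Rightarrow> real) \<Rightarrow> nat \<Rightarrow> real" where
  "marginal_param \<alpha> i \<Theta> = the_inv_into (ef_Theta (\<nu> i) (r i) (\<phi> i)) (ef_mean (\<nu> i) (r i) (\<phi> i))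
     (\<lambda>k. if k < r i then ef_E (fmeas \<alpha>) (fdim \<alpha>) (fstat \<alpha>) \<Theta> (\<lambda>x. \<phi> i (x i) k) else 0)"

lemma finite_F: "finite F"
  using inference_family unfolding inference_family_def by blast

lemma finite_factor:
  assumes "\<alpha> \<in> F"
  shows "finite \<alpha>"
proof -
  have "finite V" "\<forall>\<alpha>\<in>F. \<alpha> \<subseteq> V" using inference_family unfolding inference_family_def by blast+
  then show ?thesis using assms finite_subset by blast
qed

lemma finite_nbhd: "finite (nbhd F j)"
  using finite_F unfolding nbhd_def by simp

lemma exp_family_factor: "\<alpha> \<in> F \<Longrightarrow> exp_family (fmeas \<alpha>) (fdim \<alpha>) (fstat \<alpha>)"
  using inference_family unfolding inference_family_def by blast

lemma exp_family_vertex: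
  assumes "\<alpha> \<in> F" "i \<in> \<alpha>"
  shows "exp_family (\<nu> i) (r i) (\<phi> i)" and "inj_on (ef_mean (\<nu> i) (r i) (\<phi> i)) (ef_Theta (\<nu> i) (r i) (\<phi> i))"
  using inference_family assms unfolding inference_family_def by blast+

lemma marginal_param:
  assumes \<alpha>: "\<alpha> \<in> F" and i: "i \<in> \<alpha>" and \<Theta>: "\<Theta> \<in> ef_Theta (fmeas \<alpha>) (fdim \<alpha>) (fstat \<alpha>)"
  shows "marginal_param \<alpha> i \<Theta> \<in> ef_Theta (\<nu> i) (r i) (\<phi> i)"
    and "ef_mean (\<nu> i) (r i) (\<phi> i) (marginal_param \<alpha> i \<Theta>)
         = (\<lambda>k. if k < r i then ef_E (fmeas \<alpha>) (fdim \<alpha>) (fstat \<alpha>) \<Theta> (\<lambda>x. \<phi> i (x i) k) else 0)"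
    and "g \<in> borel_measurable (\<nu> i) \<Longrightarrow>
         ef_E (fmeas \<alpha>) (fdim \<alpha>) (fstat \<alpha>) \<Theta> (\<lambda>x. g (x i))
         = ef_E (\<nu> i) (r i) (\<phi> i) (marginal_param \<alpha> i \<Theta>) g"
proof -
  obtain \<theta>' where \<theta>': "\<theta>' \<in> ef_Theta (\<nu> i) (r i) (\<phi> i)"
    "distr (ef_distr (fmeas \<alpha>) (fdim \<alpha>) (fstat \<alpha>) \<Theta>) (\<nu> i) (\<lambda>x. x i) = ef_distr (\<nu> i) (r i) (\<phi> i) \<theta>'"
    using inference_family \<alpha> i \<Theta> unfolding inference_family_def by blast
  have E: "ef_E (fmeas \<alpha>) (fdim \<alpha>) (fstat \<alpha>) \<Theta> (\<lambda>x. g (x i)) = ef_E (\<nu> i) (r i) (\<phi> i) \<theta>' g"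
    if g: "g \<in> borel_measurable (\<nu> i)" for g
  proof -
    have proj: "(\<lambda>x. x i) \<in> measurable (fmeas \<alpha>) (\<nu> i)"
      unfolding fac_meas_def using i by (rule measurable_component_singleton)
    then have "ef_E (fmeas \<alpha>) (fdim \<alpha>) (fstat \<alpha>) \<Theta> (\<lambda>x. g (x i))
        = (\<integral>x. g (x i) \<partial>ef_distr (fmeas \<alpha>) (fdim \<alpha>) (fstat \<alpha>) \<Theta>)"
      using g exp_family_measurable[OF exp_family_factor[OF \<alpha>]] by (intro ef_E_eq_integral_distr) auto
    also have "\<dots> = (\<integral>y. g y \<partial>distr (ef_distr (fmeas \<alpha>) (fdim \<alpha>) (fstat \<alpha>) \<Theta>) (\<nu> i) (\<lambda>x. x i))"
      using proj g by (intro integral_distr[symmetric]) (auto simp: ef_distr_def)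
    also have "\<dots> = ef_E (\<nu> i) (r i) (\<phi> i) \<theta>' g"
      unfolding \<theta>'(2)
      using g exp_family_measurable[OF exp_family_vertex(1)[OF \<alpha> i]] by (intro ef_E_eq_integral_distr[symmetric])
    finally show ?thesis .
  qed
  have mean: "ef_mean (\<nu> i) (r i) (\<phi> i) \<theta>'
      = (\<lambda>k. if k < r i then ef_E (fmeas \<alpha>) (fdim \<alpha>) (fstat \<alpha>) \<Theta> (\<lambda>x. \<phi> i (x i) k) else 0)"
  proof
    fix k
    show "ef_mean (\<nu> i) (r i) (\<phi> i) \<theta>' k
      = (if k < r i then ef_E (fmeas \<alpha>) (fdim \<alpha>) (fstat \<alpha>) \<Theta> (\<lambda>x. \<phi> i (x i) k) else 0)"
    proof (cases "k < r i")
      case True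
      then have "(\<lambda>y. \<phi> i y k) \<in> borel_measurable (\<nu> i)"
        using exp_family_measurable[OF exp_family_vertex(1)[OF \<alpha> i]] by blast
      from E[OF this] show ?thesis using True unfolding ef_mean_def by simp
    qed (simp add: ef_mean_def)
  qed
  have eq: "marginal_param \<alpha> i \<Theta> = \<theta>'"
    unfolding marginal_param_def using the_inv_into_f_eq[OF exp_family_vertex(2)[OF \<alpha> i] mean \<theta>'(1)] .
  show "marginal_param \<alpha> i \<Theta> \<in> ef_Theta (\<nu> i) (r i) (\<phi> i)" using \<theta>'(1) eq by simp
  show "ef_mean (\<nu> i) (r i) (\<phi> i) (marginal_param \<alpha> i \<Theta>)
      = (\<lambda>k. if k < r i then ef_E (fmeas \<alpha>) (fdim \<alpha>) (fstat \<alpha>) \<Theta> (\<lambda>x. \<phi> i (x i) k) else 0)"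
    using mean eq by simp
  show "ef_E (fmeas \<alpha>) (fdim \<alpha>) (fstat \<alpha>) \<Theta> (\<lambda>x. g (x i))
      = ef_E (\<nu> i) (r i) (\<phi> i) (marginal_param \<alpha> i \<Theta>) g" if "g \<in> borel_measurable (\<nu> i)"
    using E[OF that] eq by simp
qed

lemma ef_cov_marginal:
  assumes \<alpha>: "\<alpha> \<in> F" and i: "i \<in> \<alpha>" and \<Theta>: "\<Theta> \<in> ef_Theta (fmeas \<alpha>) (fdim \<alpha>) (fstat \<alpha>)"
    and k: "k < r i" and l: "l < r i"
  shows "ef_cov (fmeas \<alpha>) (fdim \<alpha>) (fstat \<alpha>) \<Theta> (\<lambda>x. \<phi> i (x i)) (\<lambda>x. \<phi> i (x i)) k l
       = ef_cov (\<nu> i) (r i) (\<phi> i) (marginal_param \<alpha> i \<Theta>) (\<phi> i) (\<phi> i) k l"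
proof -
  have m: "(\<lambda>y. \<phi> i y k) \<in> borel_measurable (\<nu> i)" "(\<lambda>y. \<phi> i y l) \<in> borel_measurable (\<nu> i)"
    using exp_family_measurable[OF exp_family_vertex(1)[OF \<alpha> i]] k l by auto
  then have "(\<lambda>y. \<phi> i y k * \<phi> i y l) \<in> borel_measurable (\<nu> i)" by measurable
  then show ?thesis
    unfolding ef_cov_def
    using marginal_param(3)[OF \<alpha> i \<Theta>, of "\<lambda>y. \<phi> i y k * \<phi> i y l"]
      marginal_param(3)[OF \<alpha> i \<Theta>, of "\<lambda>y. \<phi> i y k"] marginal_param(3)[OF \<alpha> i \<Theta>, of "\<lambda>y. \<phi> i y l"] m
    by simp
qed

lemma marginal_param_has_derivative:
  assumes \<alpha>: "\<alpha> \<in> F" and i: "i \<in> \<alpha>" and \<Theta>: "\<Theta> \<in> ef_Theta (fmeas \<alpha>) (fdim \<alpha>) (fstat \<alpha>)"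
    and q: "q < fdim \<alpha>" and k: "k < r i"
  shows "((\<lambda>t. marginal_param \<alpha> i (\<Theta> + coord_vec q t) k) has_real_derivative
     (\<Sum>m<r i. mat_inv (r i) (ef_cov (\<nu> i) (r i) (\<phi> i) (marginal_param \<alpha> i \<Theta>) (\<phi> i) (\<phi> i)) k m
        * ef_cov (fmeas \<alpha>) (fdim \<alpha>) (fstat \<alpha>) \<Theta> (\<lambda>x. \<phi> i (x i)) (fstat \<alpha>) m q)) (at 0)"
proof -
  have EFa: "exp_family (fmeas \<alpha>) (fdim \<alpha>) (fstat \<alpha>)" by (rule exp_family_factor[OF \<alpha>])
  note EFi = exp_family_vertex[OF \<alpha> i]
  have D: "fdim \<alpha> > 0" using q by simp
  define mt where "mt t = (\<lambda>k'. if k' < r i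
      then ef_E (fmeas \<alpha>) (fdim \<alpha>) (fstat \<alpha>) (\<Theta> + coord_vec q t) (\<lambda>x. \<phi> i (x i) k') else 0)" for t
  define c where "c m = ef_cov (fmeas \<alpha>) (fdim \<alpha>) (fstat \<alpha>) \<Theta> (\<lambda>x. \<phi> i (x i)) (fstat \<alpha>) m q" for m
  obtain p where p: "\<And>k'. k' < r i \<Longrightarrow> p + k' < fdim \<alpha>"
    "\<And>x k'. k' < r i \<Longrightarrow> fstat \<alpha> x (p + k') = \<phi> i (x i) k'"
    by (rule fac_block[OF finite_factor[OF \<alpha>] i], rule that)
  obtain \<eta> C where \<eta>: "\<eta> > 0" and C: "\<forall>h\<in>vecs (fdim \<alpha>). l1norm (fdim \<alpha>) h < \<eta> \<longrightarrow>
     \<Theta> + h \<in> ef_Theta (fmeas \<alpha>) (fdim \<alpha>) (fstat \<alpha>) \<and> (\<forall>k'<fdim \<alpha>.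
     \<bar>ef_E (fmeas \<alpha>) (fdim \<alpha>) (fstat \<alpha>) (\<Theta> + h) (\<lambda>x. fstat \<alpha> x k')
       - ef_E (fmeas \<alpha>) (fdim \<alpha>) (fstat \<alpha>) \<Theta> (\<lambda>x. fstat \<alpha> x k')
       - (\<Sum>p'<fdim \<alpha>. h p' * ef_cov (fmeas \<alpha>) (fdim \<alpha>) (fstat \<alpha>) \<Theta> (fstat \<alpha>) (fstat \<alpha>) k' p')\<bar>
       \<le> C * (l1norm (fdim \<alpha>) h)\<^sup>2)"
    using ef_E_taylor[OF EFa D \<Theta>] by blast
  have mt_eq: "mt t k' = ef_E (fmeas \<alpha>) (fdim \<alpha>) (fstat \<alpha>) (\<Theta> + coord_vec q t) (\<lambda>x. fstat \<alpha> x (p + k'))"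
    if "k' < r i" for t k'
    unfolding mt_def using that p(2)[OF that] by simp
  have c_eq: "c k' = ef_cov (fmeas \<alpha>) (fdim \<alpha>) (fstat \<alpha>) \<Theta> (fstat \<alpha>) (fstat \<alpha>) (p + k') q"
    if "k' < r i" for k'
    unfolding c_def ef_cov_def using p(2)[OF that] by simp
  have mest: "eventually (\<lambda>t. \<forall>k'<r i. \<bar>mt t k' - mt 0 k' - t * c k'\<bar> \<le> C * t\<^sup>2) (at 0)"
    using eventually_abs_less_at_0[OF \<eta>]
  proof eventually_elim
    case (elim t)
    show ?case
    proof (intro allI impI)
      fix k' assume k': "k' < r i"
      have "l1norm (fdim \<alpha>) (coord_vec q t) < \<eta>" using elim l1norm_coord_vec[OF q] by simp
      then have "\<bar>ef_E (fmeas \<alpha>) (fdim \<alpha>) (fstat \<alpha>) (\<Theta> + coord_vec q t) (\<lambda>x. fstat \<alpha> x (p + k'))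
          - ef_E (fmeas \<alpha>) (fdim \<alpha>) (fstat \<alpha>) \<Theta> (\<lambda>x. fstat \<alpha> x (p + k'))
          - (\<Sum>p'<fdim \<alpha>. coord_vec q t p'
               * ef_cov (fmeas \<alpha>) (fdim \<alpha>) (fstat \<alpha>) \<Theta> (fstat \<alpha>) (fstat \<alpha>) (p + k') p')\<bar>
          \<le> C * (l1norm (fdim \<alpha>) (coord_vec q t))\<^sup>2"
        using C coord_vec_in_vecs[OF q] p(1)[OF k'] by blast
      then show "\<bar>mt t k' - mt 0 k' - t * c k'\<bar> \<le> C * t\<^sup>2"
        using mt_eq[OF k', of t] mt_eq[OF k', of 0] c_eq[OF k']
          ip_coord_vec[OF q, unfolded ip_def] l1norm_coord_vec[OF q]
        by simp
    qed
  qed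
  have ev: "eventually (\<lambda>t. marginal_param \<alpha> i (\<Theta> + coord_vec q t) \<in> ef_Theta (\<nu> i) (r i) (\<phi> i)
      \<and> ef_mean (\<nu> i) (r i) (\<phi> i) (marginal_param \<alpha> i (\<Theta> + coord_vec q t)) = mt t) (at 0)"
    using eventually_coord_vec_in[OF exp_family_open[OF EFa] \<Theta> q]
  proof eventually_elim
    case (elim t)
    show ?case using marginal_param(1,2)[OF \<alpha> i elim] unfolding mt_def by simp
  qed
  have at0: "marginal_param \<alpha> i (\<Theta> + coord_vec q 0) = marginal_param \<alpha> i \<Theta>" by simp
  have \<Theta>0: "\<Theta> + coord_vec q 0 = \<Theta>" by simp
  have "mt 0 = (\<lambda>k'. if k' < r i then ef_E (fmeas \<alpha>) (fdim \<alpha>) (fstat \<alpha>) \<Theta> (\<lambda>x. \<phi> i (x i) k') else 0)"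
    unfolding mt_def \<Theta>0 ..
  then have m0: "ef_mean (\<nu> i) (r i) (\<phi> i) (marginal_param \<alpha> i \<Theta>) = mt 0"
    using marginal_param(2)[OF \<alpha> i \<Theta>] by simp
  have ri: "r i > 0" using k by simp
  show ?thesis
    unfolding c_def[symmetric]
    by (rule ef_mean_inverse_has_derivative[OF EFi(1) ri EFi(2) marginal_param(1)[OF \<alpha> i \<Theta>] ev at0 m0 mest
          mat_inv_is_inv[OF exp_family_invertible_cov[OF EFi(1) marginal_param(1)[OF \<alpha> i \<Theta>]]] k])
qed

section \<open>The derivative of the LBP update\<close>

lemma lbp_T_eq_marginal_param:
  "lbp_T F \<nu> r \<phi> rb \<phi>b thb' thb \<mu> \<alpha> i
    = (\<lambda>k. marginal_param \<alpha> i (fac_param F r rb thb' thb \<mu> \<alpha>) k - (\<Sum>\<gamma>\<in>nbhd F i - {\<alpha>}. \<mu> \<gamma> i k))"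
  unfolding lbp_T_def marginal_param_def Let_def ..

lemma lbp_T_perturb_has_derivative:
  assumes \<alpha>: "\<alpha> \<in> F" and i: "i \<in> \<alpha>" and \<beta>: "\<beta> \<in> F" and j: "j \<in> \<beta>" and k: "k < r i" and l: "l < r j"
    and j\<alpha>: "j \<in> \<alpha>" and \<beta>\<alpha>: "\<beta> \<noteq> \<alpha>"
    and \<Theta>: "fac_param F r rb thb' thb \<mu> \<alpha> \<in> ef_Theta (fmeas \<alpha>) (fdim \<alpha>) (fstat \<alpha>)"
  defines "\<Theta> \<equiv> fac_param F r rb thb' thb \<mu> \<alpha>"
  defines "H \<equiv> ef_cov (\<nu> i) (r i) (\<phi> i) (marginal_param \<alpha> i \<Theta>) (\<phi> i) (\<phi> i)"
  shows "((\<lambda>t. lbp_T F \<nu> r \<phi> rb \<phi>b thb' thb (perturb \<mu> \<beta> j l t) \<alpha> i k) has_real_derivative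
     (if j \<noteq> i then mat_mult (r i) (mat_inv (r i) H)
          (ef_cov (fmeas \<alpha>) (fdim \<alpha>) (fstat \<alpha>) \<Theta> (\<lambda>x. \<phi> i (x i)) (\<lambda>x. \<phi> j (x j))) k l
      else 0)) (at 0)"
proof -
  have \<beta>N: "\<beta> \<in> nbhd F j - {\<alpha>}" using \<beta> j \<beta>\<alpha> unfolding nbhd_def by simp
  obtain p where p1: "\<And>k'. k' < r j \<Longrightarrow> p + k' < fdim \<alpha>"
    and p2: "\<And>x k'. k' < r j \<Longrightarrow> fstat \<alpha> x (p + k') = \<phi> j (x j) k'"
    and p3: "\<And>\<mu> \<beta> l t. \<beta> \<in> nbhd F j - {\<alpha>} \<Longrightarrow> finite (nbhd F j) \<Longrightarrow> l < r j \<Longrightarrow>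
           fac_param F r rb thb' thb (perturb \<mu> \<beta> j l t) \<alpha>
           = fac_param F r rb thb' thb \<mu> \<alpha> + coord_vec (p + l) t"
    by (rule fac_block[OF finite_factor[OF \<alpha>] j\<alpha>], rule that)
  note p = p1[OF l] p2[OF l] p3[OF \<beta>N finite_nbhd l, folded \<Theta>_def]
  have deriv: "((\<lambda>t. marginal_param \<alpha> i (\<Theta> + coord_vec (p + l) t) k) has_real_derivative
      mat_mult (r i) (mat_inv (r i) H) (ef_cov (fmeas \<alpha>) (fdim \<alpha>) (fstat \<alpha>) \<Theta> (\<lambda>x. \<phi> i (x i)) (\<lambda>x. \<phi> j (x j))) k l) (at 0)"
    using marginal_param_has_derivative[OF \<alpha> i \<Theta>[folded \<Theta>_def] p(1) k] p(2)
    unfolding mat_mult_def ef_cov_def H_def by simp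
  have "(\<Sum>\<gamma>\<in>nbhd F i - {\<alpha>}. perturb \<mu> \<beta> j l t \<gamma> i k)
      = (\<Sum>\<gamma>\<in>nbhd F i - {\<alpha>}. \<mu> \<gamma> i k) + (if i = j \<and> k = l then t else 0)" for t
    using sum_perturb[OF finite_Diff[OF finite_nbhd]] \<beta>N by auto
  then have lbp: "(\<lambda>t. lbp_T F \<nu> r \<phi> rb \<phi>b thb' thb (perturb \<mu> \<beta> j l t) \<alpha> i k)
      = (\<lambda>t. marginal_param \<alpha> i (\<Theta> + coord_vec (p + l) t) k
             - ((\<Sum>\<gamma>\<in>nbhd F i - {\<alpha>}. \<mu> \<gamma> i k) + (if i = j \<and> k = l then t else 0)))"
    unfolding lbp_T_eq_marginal_param p(3) \<Theta>_def by simp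
  show ?thesis
  proof (cases "j = i")
    case False
    then have "i \<noteq> j" by simp
    then show ?thesis unfolding lbp using DERIV_diff[OF deriv DERIV_const] False by simp
  next
    case True
    txt \<open>Perturbing \<open>\<mu>\<^sub>\<beta>\<^sub>\<rightarrow>\<^sub>i\<close> moves the marginal parameter by exactly the same amount as the
      subtracted message, because the covariance of \<open>\<phi>\<^sub>i\<close> under \<open>b\<^sub>\<alpha>\<close> is that under \<open>b\<^sub>i\<close>.\<close>
    have "mat_mult (r i) (mat_inv (r i) H)
        (ef_cov (fmeas \<alpha>) (fdim \<alpha>) (fstat \<alpha>) \<Theta> (\<lambda>x. \<phi> i (x i)) (\<lambda>x. \<phi> j (x j))) k l
      = mat_mult (r i) (mat_inv (r i) H) H k l"
      unfolding mat_mult_def H_def True using ef_cov_marginal[OF \<alpha> i \<Theta>[folded \<Theta>_def] _ l[unfolded True]]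
      by (intro sum.cong) auto
    also have "\<dots> = (if k = l then 1 else 0)"
      using mat_inv_is_inv[OF exp_family_invertible_cov[OF exp_family_vertex(1)[OF \<alpha> i]
            marginal_param(1)[OF \<alpha> i \<Theta>[folded \<Theta>_def]]]] k l True
      unfolding mat_is_inv_def H_def by auto
    finally have deriv': "((\<lambda>t. marginal_param \<alpha> i (\<Theta> + coord_vec (p + l) t) k) has_real_derivative
        (if k = l then 1 else 0)) (at 0)"
      using deriv by simp
    have "((\<lambda>t. marginal_param \<alpha> i (\<Theta> + coord_vec (p + l) t) k
             - ((\<Sum>\<gamma>\<in>nbhd F i - {\<alpha>}. \<mu> \<gamma> i k) + (if i = j \<and> k = l then t else 0)))
        has_real_derivative (if k = l then 1 else 0) - (0 + (if k = l then 1 else 0))) (at 0)"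
    proof (intro DERIV_diff deriv' DERIV_add DERIV_const)
      show "((\<lambda>t. if i = j \<and> k = l then t else 0) has_real_derivative (if k = l then 1 else 0)) (at 0)"
        using True by (cases "k = l") (auto intro: DERIV_ident)
    qed
    then show ?thesis unfolding lbp using True by simp
  qed
qed

lemma lbp_T_perturb_constant:
  assumes \<alpha>: "\<alpha> \<in> F" and i: "i \<in> \<alpha>" and outside: "j \<notin> \<alpha> \<or> \<beta> = \<alpha>"
  shows "((\<lambda>t. lbp_T F \<nu> r \<phi> rb \<phi>b thb' thb (perturb \<mu> \<beta> j l t) \<alpha> i k) has_real_derivative 0) (at 0)"
proof -
  have "(\<Sum>\<gamma>\<in>nbhd F i - {\<alpha>}. perturb \<mu> \<beta> j l t \<gamma> i k) = (\<Sum>\<gamma>\<in>nbhd F i - {\<alpha>}. \<mu> \<gamma> i k)" for t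
    using sum_perturb[OF finite_Diff[OF finite_nbhd]] outside i by auto
  then show ?thesis
    unfolding lbp_T_eq_marginal_param fac_param_perturb_outside[OF finite_factor[OF \<alpha>] finite_F outside]
    by simp
qed

lemma lbp_fixpoint_marginal_param:
  assumes "\<alpha> \<in> F" "i \<in> \<alpha>" "lbp_T F \<nu> r \<phi> rb \<phi>b thb' thb \<mu> \<alpha> i = \<mu> \<alpha> i"
  shows "(\<lambda>k. \<Sum>\<gamma>\<in>nbhd F i. \<mu> \<gamma> i k) = marginal_param \<alpha> i (fac_param F r rb thb' thb \<mu> \<alpha>)"
proof
  fix k
  have "\<alpha> \<in> nbhd F i" using assms(1,2) unfolding nbhd_def by simp
  then have "(\<Sum>\<gamma>\<in>nbhd F i. \<mu> \<gamma> i k) = \<mu> \<alpha> i k + (\<Sum>\<gamma>\<in>nbhd F i - {\<alpha>}. \<mu> \<gamma> i k)"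
    using finite_nbhd by (simp add: sum.remove)
  then show "(\<Sum>\<gamma>\<in>nbhd F i. \<mu> \<gamma> i k) = marginal_param \<alpha> i (fac_param F r rb thb' thb \<mu> \<alpha>) k"
    using fun_cong[OF assms(3), of k] unfolding lbp_T_eq_marginal_param by simp
qed

lemma lbp_T_derivative_at_fixpoint:
  assumes \<alpha>: "\<alpha> \<in> F" and i: "i \<in> \<alpha>" and \<beta>: "\<beta> \<in> F" and j: "j \<in> \<beta>" and k: "k < r i" and l: "l < r j"
    and belief: "fac_param F r rb thb' thb \<mu> \<alpha> \<in> ef_Theta (fmeas \<alpha>) (fdim \<alpha>) (fstat \<alpha>)"
    and fixpoint: "lbp_T F \<nu> r \<phi> rb \<phi>b thb' thb \<mu> \<alpha> i = \<mu> \<alpha> i"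
  shows "((\<lambda>t. lbp_T F \<nu> r \<phi> rb \<phi>b thb' thb (perturb \<mu> \<beta> j l t) \<alpha> i k) has_real_derivative
       (if j \<in> \<alpha> \<and> j \<noteq> i \<and> \<beta> \<noteq> \<alpha> then
          mat_mult (r i)
            (mat_inv (r i) (ef_cov (\<nu> i) (r i) (\<phi> i) (\<lambda>k'. \<Sum>\<gamma>\<in>nbhd F i. \<mu> \<gamma> i k') (\<phi> i) (\<phi> i)))
            (ef_cov (fmeas \<alpha>) (fdim \<alpha>) (fstat \<alpha>) (fac_param F r rb thb' thb \<mu> \<alpha>)
               (\<lambda>x. \<phi> i (x i)) (\<lambda>x. \<phi> j (x j))) k l
        else 0)) (at 0)"
proof (cases "j \<in> \<alpha> \<and> \<beta> \<noteq> \<alpha>")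
  case True
  then show ?thesis
    using lbp_T_perturb_has_derivative[OF \<alpha> i \<beta> j k l _ _ belief]
    unfolding lbp_fixpoint_marginal_param[OF \<alpha> i fixpoint] by auto
next
  case False
  then show ?thesis using lbp_T_perturb_constant[OF \<alpha> i] by auto
qed

end

theorem theorem10:
  fixes V :: "'v::linorder set" and F :: "'v set set"
    and \<nu> :: "'v \<Rightarrow> 'x measure" and r :: "'v \<Rightarrow> nat" and \<phi> :: "'v \<Rightarrow> 'x \<Rightarrow> nat \<Rightarrow> real"
    and rb :: "'v set \<Rightarrow> nat" and \<phi>b :: "'v set \<Rightarrow> ('v \<Rightarrow> 'x) \<Rightarrow> nat \<Rightarrow> real"
    and thb' :: "'v set \<Rightarrow> nat \<Rightarrow> real" and thb :: "'v set \<Rightarrow> 'v \<Rightarrow> nat \<Rightarrow> real"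
    and \<mu>s :: "'v set \<Rightarrow> 'v \<Rightarrow> nat \<Rightarrow> real"
  assumes IF: "inference_family V F \<nu> r \<phi> rb \<phi>b"
    and model: "\<forall>\<alpha>\<in>F. thb' \<alpha> \<in> vecs (rb \<alpha>) \<and> (\<forall>i\<in>\<alpha>. thb \<alpha> i \<in> vecs (r i))"
    and msgs: "\<forall>\<alpha>\<in>F. \<forall>i\<in>\<alpha>. \<mu>s \<alpha> i \<in> vecs (r i)"
    and beliefs: "\<forall>\<alpha>\<in>F. fac_param F r rb thb' thb \<mu>s \<alpha>
                      \<in> ef_Theta (fac_meas \<nu> \<alpha>) (fac_dim r rb \<alpha>) (fac_stat r \<phi> rb \<phi>b \<alpha>)"
    and fixpt: "\<forall>\<alpha>\<in>F. \<forall>i\<in>\<alpha>. lbp_T F \<nu> r \<phi> rb \<phi>b thb' thb \<mu>s \<alpha> i = \<mu>s \<alpha> i"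
  shows "\<forall>\<alpha>\<in>F. \<forall>i\<in>\<alpha>. \<forall>\<beta>\<in>F. \<forall>j\<in>\<beta>. \<forall>k<r i. \<forall>l<r j.
    ((\<lambda>t. lbp_T F \<nu> r \<phi> rb \<phi>b thb' thb (perturb \<mu>s \<beta> j l t) \<alpha> i k)
       has_real_derivative
       (if j \<in> \<alpha> \<and> j \<noteq> i \<and> \<beta> \<noteq> \<alpha> then
          mat_mult (r i)
            (mat_inv (r i) (ef_cov (\<nu> i) (r i) (\<phi> i) (\<lambda>k'. \<Sum>\<gamma>\<in>nbhd F i. \<mu>s \<gamma> i k') (\<phi> i) (\<phi> i)))
            (ef_cov (fac_meas \<nu> \<alpha>) (fac_dim r rb \<alpha>) (fac_stat r \<phi> rb \<phi>b \<alpha>)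
                    (fac_param F r rb thb' thb \<mu>s \<alpha>) (\<lambda>x. \<phi> i (x i)) (\<lambda>x. \<phi> j (x j))) k l
        else 0)) (at 0)"
proof -
  interpret inference_family_ctx V F \<nu> r \<phi> rb \<phi>b by unfold_locales (rule IF)
  show ?thesis
    using beliefs fixpt by (intro ballI allI impI lbp_T_derivative_at_fixpoint) auto
qed

end
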